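(* Let $G=(V,E)$ be a finite simple graph with at least one vertex and let $k\ge3$ be an integer. Then $G$ has branch-width less than $k$ if and only if $G$ has an $S_k$-tree over $\mathcal F^*$, where $\mathcal F^*$ is the set of all stars $\{(A_1,B_1),(A_2,B_2),(A_3,B_3)\}\subseteq\vec S_k$ (elements not necessarily distinct) with $G[A_1]\cup G[A_2]\cup G[A_3]=G$.
   Context: An oriented vertex separation of $G$ is an ordered pair $(A,B)$ with $A\cup B=V$ and no edge between $A\setminus B$ and $B\setminus A$; $(A,B)\le(C,D)$ iff $A\subseteq C$ and $B\supseteq D$; $(A,B)^*=(B,A)$. $\vec S_k$ is the set of those with $|A\cap B|<k$, and $S_k$ the set of pairs $\{(A,B),(B,A)\}$ with $(A,B)\in\vec S_k$. A star is a nonempty set $\sigma$ with $\vec r\le\vec s^{\,*}$ for all distinct $\vec r,\vec s\in\sigma$. An $S_k$-tree is a pair $(T,\alpha)$, $T$ a finite tree with at least one edge, $\alpha$ mapping each ordered pair $(x,y)$ with $xy\in E(T)$ to $\vec S_k$ with $\alpha(y,x)=\alpha(x,y)^*$; it is over $\mathcal F^*$ if $\{\alpha(x,t):xt\in E(T)\}\in\mathcal F^*$ for every node $t$. A branch-decomposition of $G$ is a pair $(T,L)$ with $T$ a tree all of whose nodes have degree 1 or 3 and $L$ a bijection from $E$ to the leaves of $T$; the width of an edge $f$ of $T$ is the number of vertices of $G$ incident both with an edge mapped into one component of $T-f$ and with an edge mapped into the other; the width of $(T,L)$ is the maximum width of its edges; the branch-width of $G$ is the minimum width of a branch-decomposition,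 and is defined to be $0$ if $|E|\le1$. *)

theory Defs
  imports Main
begin

definition simple_graph :: "'a set \<Rightarrow> 'a set set \<Rightarrow> bool" where
  "simple_graph V E \<longleftrightarrow> finite V \<and>
     (\<forall>e\<in>E. \<exists>x y. x \<noteq> y \<and> e = {x, y} \<and> x \<in> V \<and> y \<in> V)"

definition is_sep :: "'a set \<Rightarrow> 'a set set \<Rightarrow> 'a set \<times> 'a set \<Rightarrow> bool" where
  "is_sep V E s \<longleftrightarrow> (case s of (A, B) \<Rightarrow>
     A \<union> B = V \<and> \<not> (\<exists>e\<in>E. \<exists>x y. e = {x, y} \<and> x \<in> A - B \<and> y \<in> B - A))"

definition sep_le :: "'a set \<times> 'a set \<Rightarrow> 'a set \<times> 'a set \<Rightarrow> bool" where
  "sep_le r s \<longleftrightarrow> fst r \<subseteq> fst s \<and> snd s \<subseteq> snd r"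

definition sep_inv :: "'a set \<times> 'a set \<Rightarrow> 'a set \<times> 'a set" where
  "sep_inv s = (snd s, fst s)"

definition vecS :: "'a set \<Rightarrow> 'a set set \<Rightarrow> nat \<Rightarrow> ('a set \<times> 'a set) set" where
  "vecS V E k = {s. is_sep V E s \<and> card (fst s \<inter> snd s) < k}"

definition is_star :: "('a set \<times> 'a set) set \<Rightarrow> bool" where
  "is_star \<sigma> \<longleftrightarrow> \<sigma> \<noteq> {} \<and> (\<forall>r\<in>\<sigma>. \<forall>s\<in>\<sigma>. r \<noteq> s \<longrightarrow> sep_le r (sep_inv s))"

definition Fstar :: "'a set \<Rightarrow> 'a set set \<Rightarrow> nat \<Rightarrow> ('a set \<times> 'a set) set set" where
  "Fstar V E k = {\<sigma>. \<exists>s1 s2 s3. \<sigma> = {s1, s2, s3} \<and> \<sigma> \<subseteq> vecS V E k \<and> is_star \<sigma> \<and>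
      fst s1 \<union> fst s2 \<union> fst s3 = V \<and>
      (\<forall>e\<in>E. e \<subseteq> fst s1 \<or> e \<subseteq> fst s2 \<or> e \<subseteq> fst s3)}"

definition adj_rel :: "nat set set \<Rightarrow> (nat \<times> nat) set" where
  "adj_rel ET = {(x, y). {x, y} \<in> ET \<and> x \<noteq> y}"

definition is_cycle :: "nat set set \<Rightarrow> nat list \<Rightarrow> bool" where
  "is_cycle ET cs \<longleftrightarrow> length cs \<ge> 3 \<and> distinct cs \<and>
     (\<forall>i < length cs. {cs ! i, cs ! ((i + 1) mod length cs)} \<in> ET)"

definition is_tree :: "nat set \<Rightarrow> nat set set \<Rightarrow> bool" where
  "is_tree N ET \<longleftrightarrow> finite N \<and> N \<noteq> {} \<and>
     (\<forall>e\<in>ET. \<exists>x y. x \<noteq> y \<and> e = {x, y} \<and> x \<in> N \<and> y \<in> N) \<and>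
     (\<forall>x\<in>N. \<forall>y\<in>N. (x, y) \<in> (adj_rel ET)\<^sup>*) \<and>
     (\<nexists>cs. is_cycle ET cs)"

definition tdeg :: "nat set set \<Rightarrow> nat \<Rightarrow> nat" where
  "tdeg ET t = card {e\<in>ET. t \<in> e}"

definition has_Sk_tree_over_Fstar :: "'a set \<Rightarrow> 'a set set \<Rightarrow> nat \<Rightarrow> bool" where
  "has_Sk_tree_over_Fstar V E k \<longleftrightarrow>
     (\<exists>(N :: nat set) ET (\<alpha> :: nat \<Rightarrow> nat \<Rightarrow> 'a set \<times> 'a set).
        is_tree N ET \<and> ET \<noteq> {} \<and>
        (\<forall>x y. {x, y} \<in> ET \<and> x \<noteq> y \<longrightarrow>
            \<alpha> x y \<in> vecS V E k \<and> \<alpha> y x = sep_inv (\<alpha> x y)) \<and>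
        (\<forall>t\<in>N. {\<alpha> x t | x. {x, t} \<in> ET \<and> x \<noteq> t} \<in> Fstar V E k))"

definition branch_decomp :: "'a set set \<Rightarrow> nat set \<Rightarrow> nat set set \<Rightarrow> ('a set \<Rightarrow> nat) \<Rightarrow> bool" where
  "branch_decomp E N ET L \<longleftrightarrow> is_tree N ET \<and>
     (\<forall>t\<in>N. tdeg ET t = 1 \<or> tdeg ET t = 3) \<and>
     bij_betw L E {t\<in>N. tdeg ET t = 1}"

definition comp_minus :: "nat set set \<Rightarrow> nat set \<Rightarrow> nat \<Rightarrow> nat set" where
  "comp_minus ET f u = {w. (u, w) \<in> (adj_rel (ET - {f}))\<^sup>*}"

definition edge_width :: "'a set \<Rightarrow> 'a set set \<Rightarrow> nat set set \<Rightarrow> ('a set \<Rightarrow> nat) \<Rightarrow> nat set \<Rightarrow> nat" where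
  "edge_width V E ET L f = card {w\<in>V. \<exists>u v. f = {u, v} \<and>
      (\<exists>e1\<in>E. \<exists>e2\<in>E. w \<in> e1 \<and> w \<in> e2 \<and>
         L e1 \<in> comp_minus ET f u \<and> L e2 \<in> comp_minus ET f v)}"

definition decomp_width :: "'a set \<Rightarrow> 'a set set \<Rightarrow> nat set set \<Rightarrow> ('a set \<Rightarrow> nat) \<Rightarrow> nat" where
  "decomp_width V E ET L = Max (edge_width V E ET L ` ET)"

definition branchwidth :: "'a set \<Rightarrow> 'a set set \<Rightarrow> nat" where
  "branchwidth V E = (if card E \<le> 1 then 0
     else Inf {w. \<exists>N ET L. branch_decomp E N ET L \<and> w = decomp_width V E ET L})"

end

theory Submission
  imports Defs "HOL-Library.Transitive_Closure_Table" "HOL-Library.Nat_Bijection"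
begin

text \<open>Both sides of the equivalence are compared with the existence of a narrow tree: a
  binary tree whose leaves are the edges of G such that, for every subtree, fewer than k
  vertices lie both on an edge of the subtree and on an edge outside it. Rooting a branch
  decomposition of width < k at an edge gives a narrow tree, and conversely a narrow tree is
  a branch decomposition of width < k once its root is suppressed. A narrow tree, with the
  isolated vertices added as leaves and a pendant node below every leaf, carries an S_k-tree
  over F*: every tree edge is labelled with the separation into the vertices covered by the
  leaves below it and those covered by the other leaves. Conversely, given an S_k-tree over
  F*, induction on the component behind an oriented tree edge shows that the edges on the
  small side of its separation form a narrow set; the star at the head of the edge does the
  splitting. Since k \<ge> 3, a single edge, having two vertices, is always narrow.\<close>

section \<open>Finite trees\<close>

lemma rtrancl_path_nth:
  "rtrancl_path r x ys y \<Longrightarrow> i < length ys \<Longrightarrow> r ((x#ys)!i) (ys!i)"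
proof (induction arbitrary: i rule: rtrancl_path.induct)
  case (base x) then show ?case by simp
next
  case (step x y ys z) then show ?case by (cases i) auto
qed

lemma rtrancl_path_last: "rtrancl_path r x ys y \<Longrightarrow> last (x#ys) = y"
  by (induction rule: rtrancl_path.induct) auto

lemma adj_rel_iff[simp]: "(x,y) \<in> adj_rel ET \<longleftrightarrow> {x,y} \<in> ET \<and> x \<noteq> y"
  by (simp add: adj_rel_def)

lemma tree_edge_bridge:
  assumes T: "is_tree N ET" and ab: "{a,b} \<in> ET" "a \<noteq> b"
  shows "(a,b) \<notin> (adj_rel (ET - {{a,b}}))\<^sup>*"
proof
  assume "(a,b) \<in> (adj_rel (ET - {{a,b}}))\<^sup>*"
  hence "(\<lambda>x y. (x,y) \<in> adj_rel (ET - {{a,b}}))\<^sup>*\<^sup>* a b"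
    by (simp add: rtranclp_rtrancl_eq del: adj_rel_iff)
  then obtain ys0 where "rtrancl_path (\<lambda>x y. (x,y) \<in> adj_rel (ET - {{a,b}})) a ys0 b"
    by (auto simp: rtranclp_eq_rtrancl_path)
  then obtain ys where P: "rtrancl_path (\<lambda>x y. (x,y) \<in> adj_rel (ET - {{a,b}})) a ys b"
    and D: "distinct (a#ys)" by (rule rtrancl_path_distinct)
  have L: "last (a#ys) = b" using P by (rule rtrancl_path_last)
  have "ys \<noteq> []" using L ab by auto
  moreover have "ys \<noteq> [b]"
  proof
    assume "ys = [b]"
    with rtrancl_path_nth[OF P, of 0] show False by auto
  qed
  ultimately have len: "length ys \<ge> 2"
    using L by (cases ys; cases "tl ys"; auto)
  have "is_cycle ET (a#ys)"
    unfolding is_cycle_def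
  proof (intro conjI allI impI)
    show "3 \<le> length (a#ys)" using len by simp
    show "distinct (a#ys)" by fact
    fix i assume i: "i < length (a#ys)"
    show "{(a#ys) ! i, (a#ys) ! ((i + 1) mod length (a#ys))} \<in> ET"
    proof (cases "i < length ys")
      case True
      hence "(i+1) mod length (a#ys) = i+1" by simp
      with rtrancl_path_nth[OF P True] show ?thesis by auto
    next
      case False
      hence "i = length ys" using i by simp
      hence "(i+1) mod length (a#ys) = 0" and "(a#ys)!i = last (a#ys)"
        using \<open>ys \<noteq> []\<close> by (auto simp: last_conv_nth)
      with L ab show ?thesis by (auto simp: insert_commute)
    qed
  qed
  with T show False unfolding is_tree_def by blast
qed

lemma sym_adj_rel: "sym (adj_rel ET)"
  by (auto simp: sym_def insert_commute)

lemma adj_rel_rtrancl_sym: "(x,y) \<in> (adj_rel ET)\<^sup>* \<Longrightarrow> (y,x) \<in> (adj_rel ET)\<^sup>*"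
  using sym_rtrancl[OF sym_adj_rel] by (auto simp: sym_def)

lemma tree_reachable_node:
  assumes T: "is_tree N ET" and u: "u \<in> N" and r: "(u,w) \<in> (adj_rel ET')\<^sup>*" and sub: "ET' \<subseteq> ET"
  shows "w \<in> N"
  using r
proof (induction rule: rtrancl_induct)
  case base then show ?case using u .
next
  case (step y z)
  hence "{y,z} \<in> ET" using sub by auto
  with T show ?case unfolding is_tree_def by (auto simp: doubleton_eq_iff)
qed

lemma tree_edge_nodes:
  assumes "is_tree N ET" and "{u,v} \<in> ET" shows "u \<in> N" "v \<in> N"
  using assms unfolding is_tree_def by (auto simp: doubleton_eq_iff)+

lemma tree_edge_distinct:
  assumes "is_tree N ET" and "{u,v} \<in> ET" shows "u \<noteq> v"
  using assms unfolding is_tree_def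
    by (metis doubleton_eq_iff insert_absorb2 singleton_insert_inj_eq)

lemma tree_finite_edges: "is_tree N ET \<Longrightarrow> finite ET"
proof -
  assume T: "is_tree N ET"
  hence "ET \<subseteq> Pow N" unfolding is_tree_def by auto
  moreover have "finite N" using T unfolding is_tree_def by simp
  ultimately show ?thesis by (meson finite_Pow_iff finite_subset)
qed

lemma tree_edge_doubleton: "is_tree N ET \<Longrightarrow> g \<in> ET \<Longrightarrow> \<exists>a b. a \<noteq> b \<and> g = {a,b}"
  unfolding is_tree_def by blast

lemma tdeg_card_neighbours:
  assumes "\<And>e. e \<in> ET \<Longrightarrow> \<exists>x y. x \<noteq> y \<and> e = {x, y}"
  shows "tdeg ET v = card {w. {w, v} \<in> ET \<and> w \<noteq> v}"
proof -
  have "{e\<in>ET. v \<in> e} = (\<lambda>w. {w, v}) ` {w. {w, v} \<in> ET \<and> w \<noteq> v}"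
    using assms by (fastforce simp: insert_commute)
  moreover have "inj_on (\<lambda>w. {w, v}) {w. {w, v} \<in> ET \<and> w \<noteq> v}"
    by (rule inj_onI) (auto simp: doubleton_eq_iff)
  ultimately show ?thesis unfolding tdeg_def by (simp add: card_image)
qed

lemma tree_neighbours_finite:
  assumes "is_tree N ET"
  shows "finite {w. {v,w} \<in> ET \<and> w \<noteq> u}"
proof (rule finite_subset)
  show "{w. {v,w} \<in> ET \<and> w \<noteq> u} \<subseteq> N" using tree_edge_nodes(2)[OF assms] by blast
  show "finite N" using assms unfolding is_tree_def by simp
qed

lemma tdeg_tree:
  assumes T: "is_tree N ET" and e: "{u,v} \<in> ET"
  shows "tdeg ET v = Suc (card {w. {v,w} \<in> ET \<and> w \<noteq> u})"
proof -
  have "{w. {w, v} \<in> ET \<and> w \<noteq> v} = insert u {w. {v,w} \<in> ET \<and> w \<noteq> u}"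
    using e tree_edge_distinct[OF T] by (auto simp: insert_commute)
  then show ?thesis
    using tdeg_card_neighbours[OF tree_edge_doubleton[OF T]] tree_neighbours_finite[OF T] by simp
qed

lemma comp_minus_finite:
  assumes T: "is_tree N ET" and e: "{u,v} \<in> ET"
  shows "comp_minus ET f v \<subseteq> N" "finite (comp_minus ET f v)"
proof -
  show "comp_minus ET f v \<subseteq> N"
    unfolding comp_minus_def using tree_reachable_node[OF T tree_edge_nodes(2)[OF T e]] by blast
  then show "finite (comp_minus ET f v)" using T unfolding is_tree_def by (meson finite_subset)
qed

lemma comp_minus_self: "u \<in> comp_minus ET f u"
  unfolding comp_minus_def by simp

lemma comp_minus_cover:
  assumes T: "is_tree N ET" and e: "{u,v} \<in> ET" and t: "t \<in> N"
  shows "t \<in> comp_minus ET {u,v} u \<union> comp_minus ET {u,v} v"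
proof -
  have "(u,t) \<in> (adj_rel ET)\<^sup>*" using T t tree_edge_nodes[OF T e] unfolding is_tree_def by blast
  then show ?thesis
  proof (induction rule: rtrancl_induct)
    case base then show ?case by (simp add: comp_minus_self)
  next
    case (step y z)
    show ?case
    proof (cases "{y,z} = {u,v}")
      case True
      then have "z = u \<or> z = v" by (auto simp: doubleton_eq_iff)
      then show ?thesis using comp_minus_self by blast
    next
      case False
      hence "(y,z) \<in> adj_rel (ET - {{u,v}})" using step by auto
      from step.IH show ?thesis
      proof
        assume "y \<in> comp_minus ET {u,v} u"
        thus ?thesis using \<open>(y,z) \<in> adj_rel (ET - {{u,v}})\<close> unfolding comp_minus_def
          by (simp add: rtrancl.rtrancl_into_rtrancl del: adj_rel_iff)
      next
        assume "y \<in> comp_minus ET {u,v} v"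
        thus ?thesis using \<open>(y,z) \<in> adj_rel (ET - {{u,v}})\<close> unfolding comp_minus_def
          by (simp add: rtrancl.rtrancl_into_rtrancl del: adj_rel_iff)
      qed
    qed
  qed
qed

lemma comp_minus_disjoint:
  assumes T: "is_tree N ET" and e: "{u,v} \<in> ET"
  shows "comp_minus ET {u,v} u \<inter> comp_minus ET {u,v} v = {}"
proof (rule ccontr)
  assume "comp_minus ET {u,v} u \<inter> comp_minus ET {u,v} v \<noteq> {}"
  then obtain z where "(u,z) \<in> (adj_rel (ET - {{u,v}}))\<^sup>*" "(v,z) \<in> (adj_rel (ET - {{u,v}}))\<^sup>*"
    unfolding comp_minus_def by auto
  hence "(u,v) \<in> (adj_rel (ET - {{u,v}}))\<^sup>*" by (meson adj_rel_rtrancl_sym rtrancl_trans)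
  with tree_edge_bridge[OF T e tree_edge_distinct[OF T e]] show False by simp
qed

lemma comp_minus_child_subset:
  assumes T: "is_tree N ET" and e1: "{u,v} \<in> ET" and e2: "{v,w} \<in> ET" and wu: "w \<noteq> u"
  shows "comp_minus ET {v,w} w \<subseteq> comp_minus ET {u,v} v"
proof
  fix z assume "z \<in> comp_minus ET {v,w} w"
  hence "(w,z) \<in> (adj_rel (ET - {{v,w}}))\<^sup>*" unfolding comp_minus_def by simp
  then show "z \<in> comp_minus ET {u,v} v"
  proof (induction rule: rtrancl_induct)
    case base
    have "v \<noteq> w" using tree_edge_distinct[OF T e2] .
    moreover have "{v,w} \<noteq> {u,v}" using wu \<open>v\<noteq>w\<close> by (auto simp: doubleton_eq_iff)
    ultimately have "(v,w) \<in> adj_rel (ET - {{u,v}})" using e2 by auto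
    then show ?case unfolding comp_minus_def by (simp add: r_into_rtrancl)
  next
    case (step y z)
    show ?case
    proof (cases "{y,z} = {u,v}")
      case False
      hence "(y,z) \<in> adj_rel (ET - {{u,v}})" using step by auto
      then show ?thesis using step.IH unfolding comp_minus_def
        by (simp add: rtrancl.rtrancl_into_rtrancl)
    next
      case True
      hence "v = y \<or> v = z" by (auto simp: doubleton_eq_iff)
      hence "(w,v) \<in> (adj_rel (ET - {{v,w}}))\<^sup>*"
      proof
        assume "v = y" thus ?thesis using step.hyps(1) by simp
      next
        assume "v = z" thus ?thesis using step.hyps by (simp add: rtrancl.rtrancl_into_rtrancl)
      qed
      moreover have "{w,v} \<in> ET" "w \<noteq> v" using e2 tree_edge_distinct[OF T e2]
        by (auto simp: insert_commute)
      ultimately show ?thesis using tree_edge_bridge[OF T, of w v] by (simp add: insert_commute)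
    qed
  qed
qed

lemma comp_minus_not_parent:
  assumes T: "is_tree N ET" and e2: "{v,w} \<in> ET"
  shows "v \<notin> comp_minus ET {v,w} w"
proof
  assume "v \<in> comp_minus ET {v,w} w"
  hence "(w,v) \<in> (adj_rel (ET - {{w,v}}))\<^sup>*" unfolding comp_minus_def by (simp add: insert_commute)
  moreover have "{w,v} \<in> ET" "w \<noteq> v" using e2 tree_edge_distinct[OF T e2]
    by (auto simp: insert_commute)
  ultimately show False using tree_edge_bridge[OF T] by blast
qed

lemma comp_minus_child_psubset:
  assumes T: "is_tree N ET" and e1: "{u,v} \<in> ET" and e2: "{v,w} \<in> ET" and wu: "w \<noteq> u"
  shows "comp_minus ET {v,w} w \<subset> comp_minus ET {u,v} v"
  using comp_minus_child_subset[OF assms] comp_minus_not_parent[OF T e2] comp_minus_self by blast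

lemma comp_minus_split:
  assumes T: "is_tree N ET" and e1: "{u,v} \<in> ET"
  shows "comp_minus ET {u,v} v \<subseteq> {v} \<union> \<Union>{comp_minus ET {v,w} w |w. {v,w} \<in> ET \<and> w \<noteq> u}"
proof
  fix z assume "z \<in> comp_minus ET {u,v} v"
  hence "(v,z) \<in> (adj_rel (ET - {{u,v}}))\<^sup>*" unfolding comp_minus_def by simp
  then show "z \<in> {v} \<union> \<Union>{comp_minus ET {v,w} w |w. {v,w} \<in> ET \<and> w \<noteq> u}"
  proof (induction rule: rtrancl_induct)
    case base then show ?case by simp
  next
    case (step y z)
    from step.hyps(2) have g: "{y,z} \<in> ET" "{y,z} \<noteq> {u,v}" "y \<noteq> z" by auto
    from step.IH show ?case
    proof
      assume "y \<in> {v}"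
      hence "y = v" by simp
      with g have "z \<noteq> u" by auto
      with g \<open>y = v\<close> show ?thesis using comp_minus_self by blast
    next
      assume "y \<in> \<Union>{comp_minus ET {v,w} w |w. {v,w} \<in> ET \<and> w \<noteq> u}"
      then obtain w where w: "{v,w} \<in> ET" "w \<noteq> u" "y \<in> comp_minus ET {v,w} w" by auto
      show ?thesis
      proof (cases "{y,z} = {v,w}")
        case True
        hence "z = v \<or> z = w" by (auto simp: doubleton_eq_iff)
        then show ?thesis using w comp_minus_self by blast
      next
        case False
        hence "(y,z) \<in> adj_rel (ET - {{v,w}})" using g by auto
        hence "z \<in> comp_minus ET {v,w} w" using w(3) unfolding comp_minus_def
          by (simp add: rtrancl.rtrancl_into_rtrancl)
        then show ?thesis using w by blast
      qed
    qed
  qed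
qed

lemma comp_minus_disjoint_siblings:
  assumes T: "is_tree N ET" and e1: "{v,w1} \<in> ET" and e2: "{v,w2} \<in> ET" and ne: "w1 \<noteq> w2"
  shows "comp_minus ET {v,w1} w1 \<inter> comp_minus ET {v,w2} w2 = {}"
proof -
  have "{w1,v} \<in> ET" using e1 by (simp add: insert_commute)
  have "comp_minus ET {v,w2} w2 \<subseteq> comp_minus ET {w1,v} v"
    using comp_minus_child_subset[OF T \<open>{w1,v} \<in> ET\<close> e2] ne by auto
  moreover have "comp_minus ET {w1,v} w1 \<inter> comp_minus ET {w1,v} v = {}"
    using comp_minus_disjoint[OF T \<open>{w1,v} \<in> ET\<close>] .
  ultimately show ?thesis by (auto simp: insert_commute)
qed

section \<open>Binary trees and addresses\<close>

datatype 'b btree = Leaf 'b | Node "'b btree" "'b btree"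

fun leaves :: "'b btree \<Rightarrow> 'b set" where
  "leaves (Leaf x) = {x}"
| "leaves (Node l r) = leaves l \<union> leaves r"

fun distinct_leaves :: "'b btree \<Rightarrow> bool" where
  "distinct_leaves (Leaf x) = True"
| "distinct_leaves (Node l r) =
     (distinct_leaves l \<and> distinct_leaves r \<and> leaves l \<inter> leaves r = {})"

fun subtrees :: "'b btree \<Rightarrow> 'b btree set" where
  "subtrees (Leaf x) = {Leaf x}"
| "subtrees (Node l r) = insert (Node l r) (subtrees l \<union> subtrees r)"

lemma ex_distinct_leaves: "finite A \<Longrightarrow> A \<noteq> {} \<Longrightarrow> \<exists>t. leaves t = A \<and> distinct_leaves t"
proof (induction A rule: finite_ne_induct)
  case (singleton x) then show ?case by (intro exI[of _ "Leaf x"]) simp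
next
  case (insert x F)
  then obtain t where "leaves t = F" "distinct_leaves t" by blast
  then show ?case using insert by (intro exI[of _ "Node (Leaf x) t"]) auto
qed

lemma subtrees_leaves: "s \<in> subtrees t \<Longrightarrow> leaves s \<subseteq> leaves t"
  by (induction t) auto

lemma subtrees_distinct_leaves: "s \<in> subtrees t \<Longrightarrow> distinct_leaves t \<Longrightarrow> distinct_leaves s"
  by (induction t) auto

definition is_leaf :: "'b btree \<Rightarrow> bool" where "is_leaf s = (\<exists>x. s = Leaf x)"

fun addrs :: "'b btree \<Rightarrow> nat list set" where
  "addrs (Leaf x) = {[]}"
| "addrs (Node l r) = insert [] (Cons 0 ` addrs l \<union> Cons 1 ` addrs r)"

fun subtree_at :: "'b btree \<Rightarrow> nat list \<Rightarrow> 'b btree" where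
  "subtree_at t [] = t"
| "subtree_at (Leaf x) (c#p) = Leaf x"
| "subtree_at (Node l r) (c#p) = (if c = 0 then subtree_at l p else subtree_at r p)"

lemma addrs_finite: "finite (addrs t)"
  by (induction t) auto

lemma addrs_root: "[] \<in> addrs t"
  by (cases t) auto

lemma addrs_prefix: "p @ [c] \<in> addrs t \<Longrightarrow> p \<in> addrs t"
proof (induction t arbitrary: p)
  case (Leaf x) then show ?case by simp
next
  case (Node l r)
  show ?case
  proof (cases p)
    case Nil then show ?thesis by simp
  next
    case (Cons a p')
    then show ?thesis using Node by auto
  qed
qed

lemma addrs_hd: "p \<in> addrs t \<Longrightarrow> p \<noteq> [] \<Longrightarrow> hd p = 0 \<or> hd p = 1"
  by (cases t) auto

lemma addrs_append:
  "q \<in> addrs t \<Longrightarrow> (q @ xs \<in> addrs t \<longleftrightarrow> xs \<in> addrs (subtree_at t q)) \<and>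
    subtree_at t (q @ xs) = subtree_at (subtree_at t q) xs"
proof (induction t arbitrary: q)
  case (Leaf x) then show ?case by simp
next
  case (Node l r)
  show ?case
  proof (cases q)
    case Nil then show ?thesis by simp
  next
    case (Cons a q')
    then show ?thesis using Node by auto
  qed
qed

lemma subtree_at_subtrees: "p \<in> addrs t \<Longrightarrow> subtree_at t p \<in> subtrees t"
proof (induction t arbitrary: p)
  case (Leaf x) then show ?case by simp
next
  case (Node l r) then show ?case by (cases p) auto
qed

lemma leaves_addrs: "leaves s = {x. \<exists>q\<in>addrs s. subtree_at s q = Leaf x}"
proof (induction s)
  case (Leaf x) then show ?case by simp
next
  case (Node l r)
  show ?case
  proof
    show "leaves (Node l r) \<subseteq> {x. \<exists>q\<in>addrs (Node l r). subtree_at (Node l r) q = Leaf x}"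
    proof
      fix x assume "x \<in> leaves (Node l r)"
      hence "x \<in> leaves l \<or> x \<in> leaves r" by simp
      then show "x \<in> {x. \<exists>q\<in>addrs (Node l r). subtree_at (Node l r) q = Leaf x}"
      proof
        assume "x \<in> leaves l"
        then obtain q where "q \<in> addrs l" "subtree_at l q = Leaf x" using Node.IH(1) by auto
        then show ?thesis by (intro CollectI bexI[of _ "0 # q"]) auto
      next
        assume "x \<in> leaves r"
        then obtain q where "q \<in> addrs r" "subtree_at r q = Leaf x" using Node.IH(2) by auto
        then show ?thesis by (intro CollectI bexI[of _ "1 # q"]) auto
      qed
    qed
    show "{x. \<exists>q\<in>addrs (Node l r). subtree_at (Node l r) q = Leaf x} \<subseteq> leaves (Node l r)"
      using Node.IH by force
  qed
qed

lemma leaf_addr_unique: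
  "distinct_leaves t \<Longrightarrow> p \<in> addrs t \<Longrightarrow> q \<in> addrs t \<Longrightarrow>
    subtree_at t p = Leaf x \<Longrightarrow> subtree_at t q = Leaf x \<Longrightarrow> p = q"
proof (induction t arbitrary: p q)
  case (Leaf y) then show ?case by simp
next
  case (Node l r)
  have pne: "p \<noteq> []" and qne: "q \<noteq> []" using Node.prems by auto
  then obtain a p' b q' where pq: "p = a # p'" "q = b # q'" by (meson neq_Nil_conv)
  have ab: "a = 0 \<and> p' \<in> addrs l \<or> a = 1 \<and> p' \<in> addrs r"
    "b = 0 \<and> q' \<in> addrs l \<or> b = 1 \<and> q' \<in> addrs r"
    using Node.prems(2,3) pq by auto
  have il: "x \<in> leaves l" if "p'' \<in> addrs l" "subtree_at l p'' = Leaf x" for p''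
    using that leaves_addrs[of l] by auto
  have ir: "x \<in> leaves r" if "p'' \<in> addrs r" "subtree_at r p'' = Leaf x" for p''
    using that leaves_addrs[of r] by auto
  from ab show ?case
  proof (elim disjE conjE)
    assume "a = 0" "p' \<in> addrs l" "b = 0" "q' \<in> addrs l"
    then show ?thesis using Node pq by auto
  next
    assume "a = 0" "p' \<in> addrs l" "b = 1" "q' \<in> addrs r"
    then show ?thesis using Node.prems pq il ir by auto
  next
    assume "a = 1" "p' \<in> addrs r" "b = 0" "q' \<in> addrs l"
    then show ?thesis using Node.prems pq il ir by auto
  next
    assume "a = 1" "p' \<in> addrs r" "b = 1" "q' \<in> addrs r"
    then show ?thesis using Node pq by auto
  qed
qed

lemma child_addr:
  assumes "p \<in> addrs t"
  shows "p @ [c] \<in> addrs t \<longleftrightarrow> (\<exists>l r. subtree_at t p = Node l r) \<and> (c = 0 \<or> c = 1)"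
  using addrs_append[OF assms, of "[c]"]
    by (cases "subtree_at t p") (auto simp: image_iff addrs_root)

lemma child_subtree_at:
  assumes "p \<in> addrs t" "subtree_at t p = Node l r"
  shows "subtree_at t (p @ [0]) = l" "subtree_at t (p @ [1]) = r"
  using addrs_append[OF assms(1), of "[0]"] addrs_append[OF assms(1), of "[1]"] assms(2) by auto

section \<open>Narrow trees\<close>

text \<open>For the set P of edges mapped below a tree edge f of a branch decomposition,
  boundary E P is the vertex set whose size is the width of f.\<close>
definition boundary :: "'a set set \<Rightarrow> 'a set set \<Rightarrow> 'a set" where
  "boundary U P = \<Union>P \<inter> \<Union>(U - P)"

definition narrow_tree :: "'a set set \<Rightarrow> nat \<Rightarrow> 'a set btree \<Rightarrow> bool" where
  "narrow_tree U k t = (distinct_leaves t \<and> (\<forall>s\<in>subtrees t. card (boundary U (leaves s)) < k))"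

definition narrow_set :: "'a set set \<Rightarrow> nat \<Rightarrow> 'a set set \<Rightarrow> bool" where
  "narrow_set U k P = (\<exists>t. leaves t = P \<and> narrow_tree U k t)"

definition narrow_set0 :: "'a set set \<Rightarrow> nat \<Rightarrow> 'a set set \<Rightarrow> bool" where
  "narrow_set0 U k P = (P = {} \<or> narrow_set U k P)"

lemma narrow_set0_join:
  assumes "narrow_set0 U k P1" "narrow_set0 U k P2" "P1 \<inter> P2 = {}"
    and "P1 \<noteq> {} \<Longrightarrow> P2 \<noteq> {} \<Longrightarrow> card (boundary U (P1 \<union> P2)) < k"
  shows "narrow_set0 U k (P1 \<union> P2)"
proof (cases "P1 = {} \<or> P2 = {}")
  case True then show ?thesis using assms(1,2) by auto
next
  case False
  then obtain t1 t2
    where t: "leaves t1 = P1" "narrow_tree U k t1" "leaves t2 = P2" "narrow_tree U k t2"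
    using assms(1,2) unfolding narrow_set0_def narrow_set_def by blast
  have "narrow_tree U k (Node t1 t2)" using t assms(3,4) False unfolding narrow_tree_def by auto
  then show ?thesis using t unfolding narrow_set0_def narrow_set_def by (metis leaves.simps(2))
qed

lemma narrow_set0_singleton:
  assumes "finite e" "card e < k"
  shows "narrow_set0 U k {e}"
proof -
  have "boundary U {e} \<subseteq> e" unfolding boundary_def by auto
  hence "card (boundary U {e}) < k" using assms by (meson card_mono le_less_trans)
  hence "narrow_tree U k (Leaf e)" unfolding narrow_tree_def by simp
  then show ?thesis unfolding narrow_set0_def narrow_set_def by (metis leaves.simps(1))
qed

lemma narrow_set0_extend:
  assumes "finite F0" "narrow_set0 U k P" "P \<inter> F0 = {}"
    and "\<And>T. P \<subseteq> T \<Longrightarrow> T \<subseteq> P \<union> F0 \<Longrightarrow> card (boundary U T) < k"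
    and "\<And>e. e \<in> F0 \<Longrightarrow> finite e \<and> card e < k"
  shows "narrow_set0 U k (P \<union> F0)"
  using assms
proof (induction F0 rule: finite_induct)
  case empty then show ?case by simp
next
  case (insert x F)
  have "narrow_set0 U k (P \<union> F)"
  proof (rule insert.IH)
    show "narrow_set0 U k P" "P \<inter> F = {}" using insert.prems by auto
    show "card (boundary U T) < k" if "P \<subseteq> T" "T \<subseteq> P \<union> F" for T
      using insert.prems(3) that by auto
    show "finite e \<and> card e < k" if "e \<in> F" for e using insert.prems(4) that by auto
  qed
  moreover have "narrow_set0 U k {x}" using insert.prems(4) narrow_set0_singleton by blast
  moreover have "(P \<union> F) \<inter> {x} = {}" using insert by auto
  moreover have "card (boundary U (P \<union> F \<union> {x})) < k" using insert.prems(3)[of "P \<union> F \<union> {x}"]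
    by auto
  ultimately have "narrow_set0 U k (P \<union> F \<union> {x})" by (rule narrow_set0_join)
  then show ?case by (simp add: Un_commute Un_left_commute)
qed

lemma narrow_set0_Un_complement:
  assumes "P \<subseteq> U" "narrow_set0 U k P" "narrow_set0 U k (U - P)" "0 < k"
  shows "narrow_set0 U k U"
proof -
  have "boundary U U = {}" unfolding boundary_def by simp
  then have "narrow_set0 U k (P \<union> (U - P))"
    using narrow_set0_join[OF assms(2,3)] assms(1,4) by (simp add: Un_absorb1)
  then show ?thesis using assms(1) by (simp add: Un_absorb1)
qed

lemma narrow_set_card_le_1:
  assumes "finite E" "card E \<le> 1" "0 < k"
  shows "E = {} \<or> narrow_set E k E"
proof -
  have "E = {} \<or> (\<exists>e. E = {e})" using assms(1,2)
    by (cases "card E") (auto simp: card_1_singleton_iff)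
  moreover have "narrow_set {e} k {e}" for e
    using assms(3) unfolding narrow_set_def narrow_tree_def boundary_def
      by (intro exI[of _ "Leaf e"]) simp
  ultimately show ?thesis by blast
qed

section \<open>Separations and stars\<close>

lemma simple_graph_edge_card:
  assumes "simple_graph V E" "e \<in> E" shows "finite e" "card e = 2"
  using assms unfolding simple_graph_def by auto

lemma simple_graph_finite_edges: "simple_graph V E \<Longrightarrow> finite E"
proof -
  assume G: "simple_graph V E"
  hence "E \<subseteq> Pow V" unfolding simple_graph_def by auto
  moreover have "finite V" using G unfolding simple_graph_def by auto
  ultimately show "finite E" by (meson finite_Pow_iff finite_subset)
qed

lemma simple_graph_edge_subset: "simple_graph V E \<Longrightarrow> e \<in> E \<Longrightarrow> e \<subseteq> V"
  unfolding simple_graph_def by auto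

lemma simple_graph_finite_Union:
  assumes "simple_graph V E"
  shows "finite (\<Union>E)"
proof (rule finite_subset)
  show "\<Union>E \<subseteq> V" using simple_graph_edge_subset[OF assms] by blast
  show "finite V" using assms unfolding simple_graph_def by simp
qed

definition edges_within :: "'a set set \<Rightarrow> 'a set \<Rightarrow> 'a set set" where
  "edges_within E X = {e\<in>E. e \<subseteq> X}"

lemma boundary_subset_sep:
  assumes "T \<subseteq> edges_within E B" "E - T \<subseteq> edges_within E A"
  shows "boundary E T \<subseteq> A \<inter> B"
  using assms unfolding boundary_def edges_within_def by blast

lemma sep_edge_side:
  assumes "simple_graph V E" "is_sep V E (A,B)" "e \<in> E"
  shows "e \<subseteq> A \<or> e \<subseteq> B"
proof -
  obtain x y where e: "x \<noteq> y" "e = {x,y}" "x \<in> V" "y \<in> V" using assms(1,3)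
    unfolding simple_graph_def by blast
  have AB: "A \<union> B = V" and ns: "\<not> (\<exists>e\<in>E. \<exists>x y. e = {x, y} \<and> x \<in> A - B \<and> y \<in> B - A)"
    using assms(2) unfolding is_sep_def by auto
  show ?thesis
  proof (rule ccontr)
    assume "\<not> ?thesis"
    then have "(x \<in> A - B \<and> y \<in> B - A) \<or> (y \<in> A - B \<and> x \<in> B - A)" using e AB by auto
    then show False using ns assms(3) e(2) by (metis insert_commute)
  qed
qed

lemma sep_inv_simps[simp]: "fst (sep_inv s) = snd s" "snd (sep_inv s) = fst s"
  by (auto simp: sep_inv_def)

lemma sep_inv_sep_inv[simp]: "sep_inv (sep_inv s) = s"
  by (simp add: sep_inv_def)

lemma sep_inv_vecS:
  assumes "s \<in> vecS V E k" shows "sep_inv s \<in> vecS V E k"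
proof -
  obtain A B where s: "s = (A,B)" by (cases s)
  have 1: "A \<union> B = V" and 3: "card (A \<inter> B) < k"
    and 2: "\<not> (\<exists>e\<in>E. \<exists>x y. e = {x,y} \<and> x \<in> A - B \<and> y \<in> B - A)"
    using assms s unfolding vecS_def is_sep_def by auto
  have "\<not> (\<exists>e\<in>E. \<exists>x y. e = {x,y} \<and> x \<in> B - A \<and> y \<in> A - B)"
  proof
    assume "\<exists>e\<in>E. \<exists>x y. e = {x,y} \<and> x \<in> B - A \<and> y \<in> A - B"
    then obtain e x y where "e \<in> E" "e = {y,x}" "x \<in> B - A" "y \<in> A - B"
      by (auto simp: insert_commute)
    with 2 show False by blast
  qed
  moreover have "B \<union> A = V" "card (B \<inter> A) < k" using 1 3 by (auto simp: Int_commute Un_commute)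
  ultimately show ?thesis unfolding vecS_def is_sep_def sep_inv_def s by simp
qed

lemma vecS_finite_card:
  assumes "simple_graph V E" "s \<in> vecS V E k"
  shows "finite (fst s \<inter> snd s)" "card (fst s \<inter> snd s) < k"
proof -
  have "fst s \<union> snd s = V" "finite V"
    using assms unfolding vecS_def is_sep_def simple_graph_def by (auto split: prod.splits)
  then show "finite (fst s \<inter> snd s)" by (metis finite_Int finite_Un)
  show "card (fst s \<inter> snd s) < k" using assms(2) unfolding vecS_def by simp
qed

lemma card_boundary_less_sep:
  assumes "simple_graph V E" "a \<in> vecS V E k"
    and "T \<subseteq> edges_within E (snd a)" "E - T \<subseteq> edges_within E (fst a)"
  shows "card (boundary E T) < k"
  using boundary_subset_sep[OF assms(3,4)] vecS_finite_card[OF assms(1,2)]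
  by (meson card_mono le_less_trans)

lemma Fstar_vecS: "\<sigma> \<in> Fstar V E k \<Longrightarrow> \<sigma> \<subseteq> vecS V E k"
  unfolding Fstar_def by blast

lemma Fstar_three: "\<sigma> \<in> Fstar V E k \<Longrightarrow> \<exists>s1 s2 s3. \<sigma> = {s1, s2, s3}"
  unfolding Fstar_def by blast

lemma Fstar_star:
  assumes "\<sigma> \<in> Fstar V E k" "r \<in> \<sigma>" "s \<in> \<sigma>" "r \<noteq> s"
  shows "fst r \<subseteq> snd s"
proof -
  have "is_star \<sigma>" using assms(1) unfolding Fstar_def by blast
  then show ?thesis using assms(2-4) unfolding is_star_def sep_le_def by auto
qed

lemma Fstar_cover:
  assumes "\<sigma> \<in> Fstar V E k"
  shows "\<forall>e\<in>E. \<exists>s. s \<in> \<sigma> \<and> e \<subseteq> fst s"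
proof
  fix e assume "e \<in> E"
  obtain s1 s2 s3 where \<sigma>: "\<sigma> = {s1, s2, s3}"
    and "\<forall>e\<in>E. e \<subseteq> fst s1 \<or> e \<subseteq> fst s2 \<or> e \<subseteq> fst s3"
    using assms unfolding Fstar_def by blast
  then consider "e \<subseteq> fst s1" | "e \<subseteq> fst s2" | "e \<subseteq> fst s3" using \<open>e \<in> E\<close> by blast
  then show "\<exists>s. s \<in> \<sigma> \<and> e \<subseteq> fst s" unfolding \<sigma> by cases (intro exI conjI; simp)+
qed

lemma FstarI:
  assumes "\<sigma> = {s1,s2,s3}" "\<sigma> \<subseteq> vecS V E k"
    and "\<And>r s. r \<in> \<sigma> \<Longrightarrow> s \<in> \<sigma> \<Longrightarrow> r \<noteq> s \<Longrightarrow> fst r \<subseteq> snd s"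
    and "fst s1 \<union> fst s2 \<union> fst s3 = V"
    and "\<And>e. e \<in> E \<Longrightarrow> e \<subseteq> fst s1 \<or> e \<subseteq> fst s2 \<or> e \<subseteq> fst s3"
  shows "\<sigma> \<in> Fstar V E k"
proof -
  have "is_star \<sigma>" unfolding is_star_def
  proof (intro conjI ballI impI)
    show "\<sigma> \<noteq> {}" using assms(1) by simp
    fix r s assume "r \<in> \<sigma>" "s \<in> \<sigma>" "r \<noteq> s"
    then show "sep_le r (sep_inv s)" unfolding sep_le_def using assms(3)[of r s] assms(3)[of s r]
      by simp
  qed
  have "\<forall>e\<in>E. e \<subseteq> fst s1 \<or> e \<subseteq> fst s2 \<or> e \<subseteq> fst s3" using assms(5) by blast
  then have "\<sigma> = {s1, s2, s3} \<and> \<sigma> \<subseteq> vecS V E k \<and> is_star \<sigma> \<and>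
      fst s1 \<union> fst s2 \<union> fst s3 = V \<and> (\<forall>e\<in>E. e \<subseteq> fst s1 \<or> e \<subseteq> fst s2 \<or> e \<subseteq> fst s3)"
    using assms(1,2,4) \<open>is_star \<sigma>\<close> by simp
  then show ?thesis unfolding Fstar_def by blast
qed

definition part_sep :: "'a set set \<Rightarrow> 'a set set \<Rightarrow> 'a set \<times> 'a set" where
  "part_sep U P = (\<Union>P, \<Union>(U - P))"

lemma part_sep_vecS:
  assumes "E \<subseteq> U" "\<Union>U = V" "P \<subseteq> U" "card (boundary U P) < k"
  shows "part_sep U P \<in> vecS V E k"
proof -
  have "\<not> (x \<in> \<Union>P - \<Union>(U - P) \<and> y \<in> \<Union>(U - P) - \<Union>P)" if "{x, y} \<in> E" for x y
    using that assms(1) by (cases "{x, y} \<in> P") auto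
  then show ?thesis
    using assms unfolding vecS_def is_sep_def part_sep_def boundary_def by auto
qed

lemma sep_inv_part_sep: "P \<subseteq> U \<Longrightarrow> sep_inv (part_sep U P) = part_sep U (U - P)"
  unfolding sep_inv_def part_sep_def by (simp add: double_diff)

lemma part_sep_Fstar:
  assumes "E \<subseteq> U" "\<Union>U = V" "P1 \<union> P2 \<union> P3 = U"
    and disj: "\<And>P Q. P \<in> {P1, P2, P3} \<Longrightarrow> Q \<in> {P1, P2, P3} \<Longrightarrow> P \<noteq> Q \<Longrightarrow> P \<inter> Q = {}"
    and "{part_sep U P1, part_sep U P2, part_sep U P3} \<subseteq> vecS V E k"
  shows "{part_sep U P1, part_sep U P2, part_sep U P3} \<in> Fstar V E k"
proof (rule FstarI[OF refl assms(5)])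
  fix r s assume "r \<in> {part_sep U P1, part_sep U P2, part_sep U P3}"
    "s \<in> {part_sep U P1, part_sep U P2, part_sep U P3}" "r \<noteq> s"
  then obtain P Q where "P \<in> {P1, P2, P3}" "Q \<in> {P1, P2, P3}" "P \<noteq> Q"
    "r = part_sep U P" "s = part_sep U Q" by blast
  then show "fst r \<subseteq> snd s" using disj[of P Q] assms(3) unfolding part_sep_def by auto
qed (use assms(1-3) in \<open>auto simp: part_sep_def\<close>)

section \<open>From an S_k-tree to a narrow tree\<close>

text \<open>Every edge of F lies in the small side of some separation of the star. The edges
  assigned to separations other than a are narrow by induction; the remaining ones lie inside
  the small side of a and are added one at a time, every intermediate boundary staying inside
  the separator of a.\<close>
lemma narrow_set_star_step:
  assumes G: "simple_graph V E" and k3: "k \<ge> 3"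
    and \<sigma>: "\<sigma> \<in> Fstar V E k" and a: "a \<in> \<sigma>"
    and IH: "\<And>s P. s \<in> \<sigma> \<Longrightarrow> s \<noteq> a \<Longrightarrow> P \<noteq> {} \<Longrightarrow> P \<subseteq> edges_within E (fst s) \<Longrightarrow>
               E - P \<subseteq> edges_within E (snd s) \<Longrightarrow> narrow_set E k P"
    and F: "F \<subseteq> edges_within E (snd a)" "E - F \<subseteq> edges_within E (fst a)"
  shows "narrow_set0 E k F"
proof -
  from bchoice[OF Fstar_cover[OF \<sigma>]]
  obtain ch where ch: "\<forall>e\<in>E. ch e \<in> \<sigma> \<and> e \<subseteq> fst (ch e)" by blast
  have FE: "F \<subseteq> E" using F(1) unfolding edges_within_def by auto
  define part where "part s = {e\<in>F. ch e = s \<and> s \<noteq> a}" for s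
  define F0 where "F0 = {e\<in>F. ch e = a}"
  have part_narrow: "narrow_set0 E k (part s)" for s
  proof (cases "part s = {}")
    case False
    then have s: "s \<in> \<sigma>" "s \<noteq> a" using ch FE unfolding part_def by auto
    have "e \<subseteq> snd s" if e: "e \<in> E - part s" for e
    proof (cases "e \<in> F \<and> ch e \<noteq> a")
      case True
      then have "ch e \<noteq> s" using e unfolding part_def by auto
      then show ?thesis using e ch Fstar_star[OF \<sigma>, of "ch e" s] s(1) by auto
    next
      case False
      then have "e \<subseteq> fst a" using e F(2) ch unfolding edges_within_def by auto
      then show ?thesis using Fstar_star[OF \<sigma> a s(1)] s(2) by auto
    qed
    then have "E - part s \<subseteq> edges_within E (snd s)" unfolding edges_within_def by blast
    moreover have "part s \<subseteq> edges_within E (fst s)"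
      using ch FE unfolding part_def edges_within_def by auto
    ultimately have "narrow_set E k (part s)" using IH[OF s False] by blast
    then show ?thesis unfolding narrow_set0_def by simp
  qed (simp add: narrow_set0_def)
  have bound: "card (boundary E T) < k" if "F - F0 \<subseteq> T" "T \<subseteq> F" for T
  proof (rule card_boundary_less_sep[OF G])
    show "a \<in> vecS V E k" using Fstar_vecS[OF \<sigma>] a by blast
    show "T \<subseteq> edges_within E (snd a)" using that(2) F(1) by blast
    show "E - T \<subseteq> edges_within E (fst a)"
    proof
      fix e assume e: "e \<in> E - T"
      show "e \<in> edges_within E (fst a)"
      proof (cases "e \<in> F")
        case True
        then have "ch e = a" using e that(1) unfolding F0_def by blast
        then show ?thesis using e ch unfolding edges_within_def by auto
      qed (use e F(2) in blast)
    qed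
  qed
  obtain b c where bc: "\<sigma> \<subseteq> {b, c, a}" using Fstar_three[OF \<sigma>] a by blast
  have parts: "F - F0 = part b \<union> part c"
    using bc ch FE unfolding part_def F0_def by blast
  have "narrow_set0 E k (part b \<union> part c)"
  proof (cases "b = c")
    case False
    have "part b \<inter> part c = {}" using False unfolding part_def by blast
    moreover have "card (boundary E (F - F0)) < k" by (rule bound) auto
    ultimately show ?thesis using narrow_set0_join[OF part_narrow part_narrow] parts by simp
  qed (simp add: part_narrow)
  then have "narrow_set0 E k ((F - F0) \<union> F0)"
  proof (intro narrow_set0_extend)
    show "finite F0" using simple_graph_finite_edges[OF G] FE unfolding F0_def
      by (auto intro: finite_subset)
    show "narrow_set0 E k (F - F0)" if "narrow_set0 E k (part b \<union> part c)"
      using that parts by simp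
    show "card (boundary E T) < k" if "F - F0 \<subseteq> T" "T \<subseteq> F - F0 \<union> F0" for T
      using bound[OF that(1)] that(2) unfolding F0_def by blast
    show "finite e \<and> card e < k" if "e \<in> F0" for e
      using that FE simple_graph_edge_card[OF G] k3 unfolding F0_def by auto
  qed auto
  moreover have "(F - F0) \<union> F0 = F" unfolding F0_def by auto
  ultimately show ?thesis by simp
qed

locale Sk_tree =
  fixes V :: "'a set" and E :: "'a set set" and k :: nat and N :: "nat set" and ET :: "nat set set"
    and \<alpha> :: "nat \<Rightarrow> nat \<Rightarrow> 'a set \<times> 'a set"
  assumes G: "simple_graph V E" and k3: "k \<ge> 3" and T: "is_tree N ET"
    and edg: "\<And>x y. {x,y} \<in> ET \<Longrightarrow> x \<noteq> y \<Longrightarrow> \<alpha> x y \<in> vecS V E k \<and> \<alpha> y x = sep_inv (\<alpha> x y)"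
    and star: "\<And>t. t \<in> N \<Longrightarrow> {\<alpha> x t | x. {x,t} \<in> ET \<and> x \<noteq> t} \<in> Fstar V E k"
begin

lemma narrow_set_side:
  assumes "{x,t} \<in> ET" "x \<noteq> t" "F \<subseteq> edges_within E (snd (\<alpha> x t))"
    "E - F \<subseteq> edges_within E (fst (\<alpha> x t))"
  shows "narrow_set0 E k F"
  using assms
proof (induction "card (comp_minus ET {x,t} t)" arbitrary: x t F rule: less_induct)
  case less
  have tN: "t \<in> N" using tree_edge_nodes[OF T less.prems(1)] by simp
  show ?case
  proof (rule narrow_set_star_step[OF G k3 star[OF tN]])
    show "\<alpha> x t \<in> {\<alpha> z t | z. {z, t} \<in> ET \<and> z \<noteq> t}" using less.prems(1,2) by blast
    fix s P
    assume s: "s \<in> {\<alpha> z t | z. {z, t} \<in> ET \<and> z \<noteq> t}" "s \<noteq> \<alpha> x t"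
      and P: "P \<noteq> {}" "P \<subseteq> edges_within E (fst s)" "E - P \<subseteq> edges_within E (snd s)"
    obtain y where y: "s = \<alpha> y t" "{y,t} \<in> ET" "y \<noteq> t" using s(1) by blast
    have ty: "{t,y} \<in> ET" "y \<noteq> x" using y s(2) by (auto simp: insert_commute)
    have "card (comp_minus ET {t,y} y) < card (comp_minus ET {x,t} t)"
      using comp_minus_child_psubset[OF T less.prems(1) ty] comp_minus_finite[OF T less.prems(1)]
      by (simp add: psubset_card_mono)
    moreover have "\<alpha> t y = sep_inv s" using edg[OF y(2,3)] y(1) by simp
    ultimately have "narrow_set0 E k P"
      using less.hyps[OF _ ty(1) y(3)[symmetric]] P(2,3) by simp
    then show "narrow_set E k P" using P(1) unfolding narrow_set0_def by simp
  qed (use less.prems in auto)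
qed

lemma narrow_set_all_edges:
  assumes "ET \<noteq> {}"
  shows "narrow_set0 E k E"
proof -
  obtain f where "f \<in> ET" using assms by blast
  then obtain x t where e: "{x,t} \<in> ET" "x \<noteq> t" using tree_edge_doubleton[OF T] by blast
  have te: "{t,x} \<in> ET" using e(1) by (simp add: insert_commute)
  define A B where "A = fst (\<alpha> x t)" and "B = snd (\<alpha> x t)"
  have inv: "\<alpha> t x = (B, A)" using edg[OF e] unfolding A_def B_def sep_inv_def by simp
  have "is_sep V E (A, B)" using edg[OF e] unfolding vecS_def A_def B_def by simp
  define F where "F = edges_within E B"
  have FE: "F \<subseteq> E" unfolding F_def edges_within_def by auto
  have rest: "E - F \<subseteq> edges_within E A"
    using sep_edge_side[OF G \<open>is_sep V E (A, B)\<close>] unfolding F_def edges_within_def by auto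
  have "narrow_set0 E k F" using narrow_set_side[OF e, of F] rest unfolding F_def A_def B_def
    by simp
  moreover have "E - (E - F) \<subseteq> edges_within E B" using FE unfolding F_def by auto
  then have "narrow_set0 E k (E - F)"
    using narrow_set_side[OF te e(2)[symmetric], of "E - F"] rest inv by simp
  ultimately show ?thesis using narrow_set0_Un_complement[OF FE] k3 by simp
qed

end

lemma narrow_set_of_Sk_tree:
  assumes G: "simple_graph V E" and k3: "k \<ge> 3" and "E \<noteq> {}"
    and "has_Sk_tree_over_Fstar V E k"
  shows "narrow_set E k E"
proof -
  obtain N ET \<alpha> where "is_tree N ET" "ET \<noteq> {}"
    "\<forall>x y. {x, y} \<in> ET \<and> x \<noteq> y \<longrightarrow> \<alpha> x y \<in> vecS V E k \<and> \<alpha> y x = sep_inv (\<alpha> x y)"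
    "\<forall>t\<in>N. {\<alpha> x t | x. {x, t} \<in> ET \<and> x \<noteq> t} \<in> Fstar V E k"
    using assms(4) unfolding has_Sk_tree_over_Fstar_def by blast
  then interpret Sk_tree V E k N ET \<alpha> using G k3 by unfold_locales auto
  show ?thesis using narrow_set_all_edges \<open>ET \<noteq> {}\<close> \<open>E \<noteq> {}\<close>
    unfolding narrow_set0_def by blast
qed

section \<open>From a branch decomposition to a narrow tree\<close>

locale narrow_branch_decomp =
  fixes V :: "'a set" and E :: "'a set set" and k :: nat and N :: "nat set" and ET :: "nat set set"
    and L :: "'a set \<Rightarrow> nat"
  assumes G: "simple_graph V E" and k3: "k \<ge> 3" and decomp: "branch_decomp E N ET L"
    and W: "\<And>f. f \<in> ET \<Longrightarrow> edge_width V E ET L f < k"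
begin

lemma T: "is_tree N ET" using decomp unfolding branch_decomp_def by simp

lemma deg: "t \<in> N \<Longrightarrow> tdeg ET t = 1 \<or> tdeg ET t = 3" using decomp unfolding branch_decomp_def by simp

lemma bij: "bij_betw L E {t\<in>N. tdeg ET t = 1}" using decomp unfolding branch_decomp_def by simp

lemma L_leaf: "e \<in> E \<Longrightarrow> L e \<in> N \<and> tdeg ET (L e) = 1"
  using bij unfolding bij_betw_def by auto

lemma L_inj: "e1 \<in> E \<Longrightarrow> e2 \<in> E \<Longrightarrow> L e1 = L e2 \<Longrightarrow> e1 = e2"
  using bij unfolding bij_betw_def inj_on_def by auto

lemma L_surj: "t \<in> N \<Longrightarrow> tdeg ET t = 1 \<Longrightarrow> \<exists>e\<in>E. L e = t"
proof -
  assume "t \<in> N" "tdeg ET t = 1"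
  hence "t \<in> L ` E" using bij unfolding bij_betw_def by auto
  then show ?thesis by auto
qed

definition side_edges :: "nat \<Rightarrow> nat \<Rightarrow> 'a set set" where
  "side_edges u v = {e\<in>E. L e \<in> comp_minus ET {u,v} v}"

lemma boundary_side_edges_less:
  assumes e: "{u,v} \<in> ET"
  shows "card (boundary E (side_edges u v)) < k"
proof -
  let ?S = "{w\<in>V. \<exists>u' v'. {u,v} = {u', v'} \<and>
      (\<exists>e1\<in>E. \<exists>e2\<in>E. w \<in> e1 \<and> w \<in> e2 \<and>
         L e1 \<in> comp_minus ET {u,v} u' \<and> L e2 \<in> comp_minus ET {u,v} v')}"
  have "boundary E (side_edges u v) \<subseteq> ?S"
  proof
    fix w assume "w \<in> boundary E (side_edges u v)"
    then obtain e1 e2 where w: "w \<in> e1" "e1 \<in> side_edges u v" "w \<in> e2" "e2 \<in> E - side_edges u v"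
      unfolding boundary_def by auto
    have "e1 \<in> E" "L e1 \<in> comp_minus ET {u,v} v" using w(2) unfolding side_edges_def by auto
    moreover have "e2 \<in> E" using w by auto
    moreover have "L e2 \<in> comp_minus ET {u,v} u"
      using comp_minus_cover[OF T e L_leaf[OF \<open>e2 \<in> E\<close>, THEN conjunct1]] w(4)
        unfolding side_edges_def by auto
    moreover have "w \<in> V" using simple_graph_edge_subset[OF G \<open>e1 \<in> E\<close>] w(1) by auto
    ultimately show "w \<in> ?S" using w(1,3) by (auto simp: insert_commute)
  qed
  moreover have "finite ?S" using G unfolding simple_graph_def by simp
  ultimately have "card (boundary E (side_edges u v)) \<le> card ?S" by (rule card_mono[rotated])
  moreover have "card ?S = edge_width V E ET L {u,v}" unfolding edge_width_def by simp
  ultimately show ?thesis using W[OF e] by simp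
qed

lemma side_edges_leaf:
  assumes "{u,v} \<in> ET" "tdeg ET v = 1"
  obtains e where "e \<in> E" "side_edges u v = {e}"
proof -
  have "finite {w. {v,w} \<in> ET \<and> w \<noteq> u}" using tree_neighbours_finite[OF T] by blast
  then have "{w. {v,w} \<in> ET \<and> w \<noteq> u} = {}" using tdeg_tree[OF T assms(1)] assms(2) by simp
  then have "comp_minus ET {u,v} v = {v}" using comp_minus_split[OF T assms(1)] comp_minus_self
    by auto
  moreover obtain e where "e \<in> E" "L e = v" using L_surj tree_edge_nodes(2)[OF T assms(1)] assms(2)
    by blast
  ultimately show ?thesis using that L_inj unfolding side_edges_def by auto
qed

lemma side_edges_inner:
  assumes "{u,v} \<in> ET" "tdeg ET v = 3"
  obtains w1 w2 where "{v,w1} \<in> ET" "{v,w2} \<in> ET" "w1 \<noteq> u" "w2 \<noteq> u" "w1 \<noteq> w2"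
    "side_edges u v = side_edges v w1 \<union> side_edges v w2"
proof -
  have "finite {w. {v,w} \<in> ET \<and> w \<noteq> u}" using tree_neighbours_finite[OF T] by blast
  then have "card {w. {v,w} \<in> ET \<and> w \<noteq> u} = 2" using tdeg_tree[OF T assms(1)] assms(2) by simp
  then obtain w1 w2 where w: "{w. {v,w} \<in> ET \<and> w \<noteq> u} = {w1, w2}" "w1 \<noteq> w2"
    unfolding card_2_iff by blast
  then have nb: "{v,w1} \<in> ET" "{v,w2} \<in> ET" "w1 \<noteq> u" "w2 \<noteq> u" by auto
  have "w = w1 \<or> w = w2" if "{v,w} \<in> ET" "w \<noteq> u" for w using w(1) that by blast
  then have "comp_minus ET {u,v} v \<subseteq> {v} \<union> comp_minus ET {v,w1} w1 \<union> comp_minus ET {v,w2} w2"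
    using comp_minus_split[OF T assms(1)] by blast
  moreover have "L e \<noteq> v" if "e \<in> E" for e using L_leaf[OF that] assms(2) by auto
  ultimately have "side_edges u v \<subseteq> side_edges v w1 \<union> side_edges v w2"
    unfolding side_edges_def by blast
  moreover have "side_edges v w1 \<union> side_edges v w2 \<subseteq> side_edges u v"
    using comp_minus_child_subset[OF T assms(1) nb(1,3)] comp_minus_child_subset[OF T assms(1)
      nb(2,4)]
    unfolding side_edges_def by blast
  ultimately show ?thesis by (intro that[OF nb w(2)]) (rule subset_antisym)
qed

lemma narrow_set_side_edges:
  assumes "{u,v} \<in> ET"
  shows "narrow_set0 E k (side_edges u v)"
  using assms
proof (induction "card (comp_minus ET {u,v} v)" arbitrary: u v rule: less_induct)
  case less
  have IH: "narrow_set0 E k (side_edges v w)" if "{v,w} \<in> ET" "w \<noteq> u" for w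
  proof (rule less.hyps[OF _ that(1)])
    show "card (comp_minus ET {v,w} w) < card (comp_minus ET {u,v} v)"
      using comp_minus_child_psubset[OF T less.prems that] comp_minus_finite[OF T less.prems]
      by (simp add: psubset_card_mono)
  qed
  from deg[OF tree_edge_nodes(2)[OF T less.prems]] show ?case
  proof
    assume "tdeg ET v = 1"
    then obtain e where "e \<in> E" "side_edges u v = {e}" using side_edges_leaf less.prems by blast
    then show ?thesis using narrow_set0_singleton[of e k E] simple_graph_edge_card[OF G] k3 by simp
  next
    assume "tdeg ET v = 3"
    then obtain w1 w2 where w: "{v,w1} \<in> ET" "{v,w2} \<in> ET" "w1 \<noteq> u" "w2 \<noteq> u" "w1 \<noteq> w2"
      and split: "side_edges u v = side_edges v w1 \<union> side_edges v w2"
      using side_edges_inner less.prems by blast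
    have "side_edges v w1 \<inter> side_edges v w2 = {}"
      using comp_minus_disjoint_siblings[OF T w(1,2,5)] unfolding side_edges_def by blast
    then show ?thesis
      using narrow_set0_join[OF IH[OF w(1,3)] IH[OF w(2,4)]] boundary_side_edges_less[OF less.prems]
      unfolding split by simp
  qed
qed

lemma narrow_set_all_edges:
  assumes "E \<noteq> {}"
  shows "narrow_set E k E"
proof -
  obtain e where "e \<in> E" using assms by auto
  then have "{f\<in>ET. L e \<in> f} \<noteq> {}" using L_leaf unfolding tdeg_def
    by (metis card.empty zero_neq_one)
  then obtain f where "f \<in> ET" by blast
  then obtain u v where uv: "{u,v} \<in> ET" "u \<noteq> v" using tree_edge_doubleton[OF T] by blast
  then have vu: "{v,u} \<in> ET" by (simp add: insert_commute)
  have "L e \<in> comp_minus ET {u,v} u \<or> L e \<in> comp_minus ET {u,v} v" if "e \<in> E" for e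
    using comp_minus_cover[OF T uv(1)] L_leaf[OF that] by blast
  then have "E - side_edges u v = side_edges v u"
    using comp_minus_disjoint[OF T uv(1)] unfolding side_edges_def by (auto simp: insert_commute)
  moreover have "side_edges u v \<subseteq> E" unfolding side_edges_def by auto
  ultimately have "narrow_set0 E k E"
    using narrow_set0_Un_complement[OF _ narrow_set_side_edges[OF uv(1)]] narrow_set_side_edges[OF
      vu] k3
    by simp
  then show ?thesis using assms unfolding narrow_set0_def by blast
qed
end

section \<open>Trees on prefix-closed sets of addresses\<close>

text \<open>Tree nodes are natural numbers. Concrete trees are built from prefix-closed sets of
  addresses (lists of child indices), encoded by list_encode, every non-empty address being
  joined to its parent.\<close>
abbreviation enc :: "nat list \<Rightarrow> nat" where "enc \<equiv> list_encode"

lemma enc_eq[simp]: "enc p = enc q \<longleftrightarrow> p = q"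
  by (metis list_encode_inverse)

definition addr_edges :: "nat list set \<Rightarrow> nat set set" where
  "addr_edges S = {{enc p, enc (p @ [c])} | p c. p @ [c] \<in> S}"

definition prefix_closed :: "nat list set \<Rightarrow> bool" where
  "prefix_closed S = (\<forall>p c. p @ [c] \<in> S \<longrightarrow> p \<in> S)"

lemma prefix_closedD: "prefix_closed S \<Longrightarrow> p @ [c] \<in> S \<Longrightarrow> p \<in> S"
  unfolding prefix_closed_def by blast

lemma addr_edgesI: "p @ [c] \<in> S \<Longrightarrow> {enc p, enc (p @ [c])} \<in> addr_edges S"
  unfolding addr_edges_def by blast

lemma addr_edgesE:
  assumes "e \<in> addr_edges S"
  obtains p c where "p @ [c] \<in> S" "e = {enc p, enc (p @ [c])}"
  using assms unfolding addr_edges_def by blast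

lemma addr_edges_doubleton:
  assumes "e \<in> addr_edges S"
  shows "\<exists>x y. x \<noteq> y \<and> e = {x, y}"
proof -
  obtain p c where "e = {enc p, enc (p @ [c])}" using assms by (rule addr_edgesE)
  moreover have "enc p \<noteq> enc (p @ [c])" by simp
  ultimately show ?thesis by blast
qed

lemma addr_edges_root_reach:
  assumes "prefix_closed S" "q \<in> S"
  shows "(enc [], enc q) \<in> (adj_rel (addr_edges S))\<^sup>*"
  using assms(2)
proof (induction q rule: rev_induct)
  case Nil then show ?case by simp
next
  case (snoc c q)
  hence "q \<in> S" using prefix_closedD[OF assms(1)] by blast
  moreover have "(enc q, enc (q @ [c])) \<in> adj_rel (addr_edges S)"
    using addr_edgesI[OF snoc.prems] by simp
  ultimately show ?case using snoc.IH by (simp add: rtrancl.rtrancl_into_rtrancl del: adj_rel_iff)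
qed

lemma succ_mod_neq_pred_mod:
  fixes i L :: nat
  assumes "3 \<le> L" "i < L" "(i + 1) mod L = (i + (L - 1)) mod L"
  shows False
proof (cases "i + 1 < L")
  case True
  hence a: "(i + 1) mod L = i + 1" by simp
  show False
  proof (cases "i = 0")
    case True then show False using a assms by simp
  next
    case False
    hence "i + (L - 1) = (i - 1) + L" using assms by linarith
    hence "(i + (L - 1)) mod L = (i - 1) mod L" by (simp only: mod_add_self2)
    also have "\<dots> = i - 1" using assms by (intro mod_less) linarith
    finally have "(i + (L - 1)) mod L = i - 1" .
    then show False using a assms False by linarith
  qed
next
  case False
  hence "i + 1 = L" using assms by linarith
  hence m1: "(i + 1) mod L = 0" by simp
  have "i + (L - 1) = (L - 2) + L" using \<open>i + 1 = L\<close> assms by linarith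
  hence "(i + (L - 1)) mod L = (L - 2) mod L" by (simp only: mod_add_self2)
  also have "\<dots> = L - 2" using assms by (intro mod_less) linarith
  finally have "(i + (L - 1)) mod L = L - 2" .
  with m1 show False using assms by linarith
qed

lemma addr_edges_parent:
  assumes "{x,y} \<in> addr_edges S" "length (list_decode y) \<le> length (list_decode x)"
  shows "list_decode y = butlast (list_decode x) \<and> list_decode x \<noteq> []"
proof -
  obtain p c where pc: "p @ [c] \<in> S" "{x,y} = {enc p, enc (p @ [c])}" using assms(1)
    by (rule addr_edgesE)
  hence "(x = enc p \<and> y = enc (p @ [c])) \<or> (y = enc p \<and> x = enc (p @ [c]))"
    by (auto simp: doubleton_eq_iff)
  then show ?thesis using assms(2) by auto
qed

text \<open>On a cycle, a node with the longest address would have its parent as both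
  cycle neighbours.\<close>
lemma addr_edges_acyclic:
  assumes "is_cycle (addr_edges S) cs"
  shows False
proof -
  let ?L = "length cs"
  let ?f = "\<lambda>j. length (list_decode (cs ! j))"
  have L3: "3 \<le> ?L" and D: "distinct cs"
    and E: "\<forall>i<?L. {cs ! i, cs ! ((i + 1) mod ?L)} \<in> addr_edges S"
    using assms unfolding is_cycle_def by auto
  have L0: "0 < ?L" using L3 by linarith
  have "Max (?f ` {..<?L}) \<in> ?f ` {..<?L}" using L0 by (intro Max_in) auto
  then obtain i where i: "i < ?L" "?f i = Max (?f ` {..<?L})" by auto
  have i_max: "?f j \<le> ?f i" if "j < ?L" for j unfolding i(2) using that by (intro Max_ge) auto
  define j1 where "j1 = (i + 1) mod ?L"
  define j0 where "j0 = (i + (?L - 1)) mod ?L"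
  have j1L: "j1 < ?L" and j0L: "j0 < ?L" unfolding j1_def j0_def using L0 by auto
  have e1: "{cs ! i, cs ! j1} \<in> addr_edges S" using E i(1) unfolding j1_def by simp
  have "(j0 + 1) mod ?L = i"
  proof -
    have "(j0 + 1) mod ?L = (i + (?L - 1) + 1) mod ?L" unfolding j0_def by (simp add: mod_simps)
    also have "i + (?L - 1) + 1 = i + ?L" using L3 by simp
    finally show ?thesis using i(1) by simp
  qed
  hence e0: "{cs ! i, cs ! j0} \<in> addr_edges S" using E j0L by (metis insert_commute)
  have p1: "list_decode (cs ! j1) = butlast (list_decode (cs ! i))"
    using addr_edges_parent[OF e1 i_max[OF j1L]] by blast
  have p0: "list_decode (cs ! j0) = butlast (list_decode (cs ! i))"
    using addr_edges_parent[OF e0 i_max[OF j0L]] by blast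
  have "cs ! j1 = cs ! j0" using p1 p0 by (metis list_decode_inverse)
  hence "j1 = j0" using D j1L j0L by (simp add: nth_eq_iff_index_eq)
  then show False using succ_mod_neq_pred_mod[OF L3 i(1)] unfolding j1_def j0_def by simp
qed

lemma prefix_closed_tree:
  assumes "finite S" "[] \<in> S" "prefix_closed S"
  shows "is_tree (enc ` S) (addr_edges S)"
  unfolding is_tree_def
proof (intro conjI ballI)
  show "finite (enc ` S)" using assms by simp
  show "enc ` S \<noteq> {}" using assms by auto
  fix e assume "e \<in> addr_edges S"
  then obtain p c where pc: "p @ [c] \<in> S" "e = {enc p, enc (p @ [c])}" by (rule addr_edgesE)
  have "enc p \<noteq> enc (p @ [c])" by simp
  then show "\<exists>x y. x \<noteq> y \<and> e = {x, y} \<and> x \<in> enc ` S \<and> y \<in> enc ` S"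
    using prefix_closedD[OF assms(3) pc(1)] pc by blast
next
  fix x y assume "x \<in> enc ` S" "y \<in> enc ` S"
  then obtain p q where "x = enc p" "y = enc q" "p \<in> S" "q \<in> S" by auto
  then show "(x, y) \<in> (adj_rel (addr_edges S))\<^sup>*"
    using addr_edges_root_reach[OF assms(3)] adj_rel_rtrancl_sym by (meson rtrancl_trans)
next
  show "\<nexists>cs. is_cycle (addr_edges S) cs" using addr_edges_acyclic by blast
qed

lemma addr_edges_neighbour_iff:
  assumes "prefix_closed S" "p \<in> S"
  shows "{z, enc p} \<in> addr_edges S \<longleftrightarrow>
    (\<exists>c. p @ [c] \<in> S \<and> z = enc (p @ [c])) \<or> (p \<noteq> [] \<and> z = enc (butlast p))"
proof
  assume "{z, enc p} \<in> addr_edges S"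
  then obtain q c where qc: "q @ [c] \<in> S" "{z, enc p} = {enc q, enc (q @ [c])}"
    by (rule addr_edgesE)
  hence "(z = enc q \<and> p = q @ [c]) \<or> (z = enc (q @ [c]) \<and> p = q)" by (auto simp: doubleton_eq_iff)
  then show "(\<exists>c. p @ [c] \<in> S \<and> z = enc (p @ [c])) \<or> (p \<noteq> [] \<and> z = enc (butlast p))"
    using qc(1) by auto
next
  assume "(\<exists>c. p @ [c] \<in> S \<and> z = enc (p @ [c])) \<or> (p \<noteq> [] \<and> z = enc (butlast p))"
  then show "{z, enc p} \<in> addr_edges S"
  proof
    assume "\<exists>c. p @ [c] \<in> S \<and> z = enc (p @ [c])"
    then obtain c where "p @ [c] \<in> S" "z = enc (p @ [c])" by blast
    then show ?thesis using addr_edgesI[of p c S] by (simp add: insert_commute)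
  next
    assume a: "p \<noteq> [] \<and> z = enc (butlast p)"
    hence "butlast p @ [last p] \<in> S" using assms(2) by simp
    from addr_edgesI[OF this] have "{enc (butlast p), enc p} \<in> addr_edges S" using a by simp
    then show ?thesis using a by (simp add: insert_commute)
  qed
qed

definition children :: "nat list set \<Rightarrow> nat list \<Rightarrow> nat set" where
  "children S p = {c. p @ [c] \<in> S}"

lemma children_finite: "finite S \<Longrightarrow> finite (children S p)"
proof -
  assume "finite S"
  have "children S p \<subseteq> last ` S" unfolding children_def by force
  then show ?thesis using \<open>finite S\<close> by (meson finite_imageI finite_subset)
qed

lemma tdeg_addr_edges:
  assumes "finite S" "prefix_closed S" "p \<in> S"
  shows "tdeg (addr_edges S) (enc p) = card (children S p) + (if p = [] then 0 else 1)"
proof -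
  define Ch where "Ch = (\<lambda>c. enc (p @ [c])) ` children S p"
  define Pa where "Pa = (if p = [] then {} else {enc (butlast p)})"
  have "butlast p \<noteq> p" if "p \<noteq> []" using that by (cases p rule: rev_cases) auto
  then have nbrs: "{w. {w, enc p} \<in> addr_edges S \<and> w \<noteq> enc p} = Ch \<union> Pa"
    using addr_edges_neighbour_iff[OF assms(2,3)] unfolding Ch_def Pa_def children_def by auto
  have "butlast p \<noteq> p @ [c]" for c
  proof
    assume "butlast p = p @ [c]"
    then have "length (butlast p) = length (p @ [c])" by simp
    then show False by simp
  qed
  then have "Ch \<inter> Pa = {}" unfolding Ch_def Pa_def by auto
  have "tdeg (addr_edges S) (enc p) = card {w. {w, enc p} \<in> addr_edges S \<and> w \<noteq> enc p}"
    by (rule tdeg_card_neighbours) (rule addr_edges_doubleton)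
  also have "\<dots> = card Ch + card Pa"
    unfolding nbrs using children_finite[OF assms(1)] \<open>Ch \<inter> Pa = {}\<close>
    by (intro card_Un_disjoint) (auto simp: Ch_def Pa_def)
  also have "card Ch = card (children S p)" unfolding Ch_def
    by (rule card_image) (rule inj_onI, simp)
  finally show ?thesis unfolding Pa_def by simp
qed

definition descendants :: "nat list set \<Rightarrow> nat list \<Rightarrow> nat list set" where
  "descendants S r = {q\<in>S. \<exists>xs. q = r @ xs}"

lemma descendants_subset_comp_minus:
  assumes "prefix_closed S" "p @ [c] \<in> S"
  shows "enc ` descendants S (p @ [c]) \<subseteq>
    comp_minus (addr_edges S) {enc p, enc (p @ [c])} (enc (p @ [c]))"
proof
  let ?f = "{enc p, enc (p @ [c])}"
  let ?r = "p @ [c]"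
  fix z assume "z \<in> enc ` descendants S ?r"
  then obtain xs where xs: "?r @ xs \<in> S" "z = enc (?r @ xs)" unfolding descendants_def by auto
  have "(enc ?r, enc (?r @ xs)) \<in> (adj_rel (addr_edges S - {?f}))\<^sup>*"
    using xs(1)
  proof (induction xs rule: rev_induct)
    case Nil then show ?case by simp
  next
    case (snoc d xs)
    have "?r @ xs \<in> S" using prefix_closedD[OF assms(1), of "?r @ xs" d] snoc.prems by simp
    moreover have "{enc (?r @ xs), enc (?r @ xs @ [d])} \<in> addr_edges S"
      using addr_edgesI[of "?r @ xs" d S] snoc.prems by simp
    moreover have "{enc (?r @ xs), enc (?r @ xs @ [d])} \<noteq> ?f"
    proof
      assume "{enc (?r @ xs), enc (?r @ xs @ [d])} = ?f"
      hence "?r @ xs @ [d] = p \<or> ?r @ xs @ [d] = p @ [c]" by (auto simp: doubleton_eq_iff)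
      moreover have "length (?r @ xs @ [d]) \<noteq> length p" "length (?r @ xs @ [d]) \<noteq> length (p @ [c])"
        by simp_all
      ultimately show False by auto
    qed
    ultimately have "(enc (?r @ xs), enc (?r @ xs @ [d])) \<in> adj_rel (addr_edges S - {?f})" by simp
    then show ?case using snoc.IH \<open>?r @ xs \<in> S\<close>
      by (simp add: rtrancl.rtrancl_into_rtrancl del: adj_rel_iff)
  qed
  then show "z \<in> comp_minus (addr_edges S) ?f (enc ?r)" unfolding comp_minus_def using xs by simp
qed

lemma comp_minus_subset_descendants:
  assumes "prefix_closed S" "p @ [c] \<in> S"
  shows "comp_minus (addr_edges S) {enc p, enc (p @ [c])} (enc (p @ [c])) \<subseteq>
    enc ` descendants S (p @ [c])"
proof
  let ?f = "{enc p, enc (p @ [c])}"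
  let ?r = "p @ [c]"
  fix z assume "z \<in> comp_minus (addr_edges S) ?f (enc ?r)"
  hence "(enc ?r, z) \<in> (adj_rel (addr_edges S - {?f}))\<^sup>*" unfolding comp_minus_def by simp
  then show "z \<in> enc ` descendants S ?r"
  proof (induction rule: rtrancl_induct)
    case base then show ?case using assms(2) unfolding descendants_def by force
  next
    case (step y z)
    obtain q where q: "q \<in> descendants S ?r" "y = enc q" using step.IH by auto
    from step.hyps(2) have g: "{y,z} \<in> addr_edges S" "{y,z} \<noteq> ?f" by auto
    obtain p' c' where pc: "p' @ [c'] \<in> S" "{y,z} = {enc p', enc (p' @ [c'])}" using g(1)
      by (rule addr_edgesE)
    hence "(q = p' \<and> z = enc (p' @ [c'])) \<or> (q = p' @ [c'] \<and> z = enc p')" using q(2)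
      by (auto simp: doubleton_eq_iff)
    then show ?case
    proof
      assume a: "q = p' \<and> z = enc (p' @ [c'])"
      obtain xs where "q = ?r @ xs" using q(1) unfolding descendants_def by auto
      hence "p' @ [c'] \<in> descendants S ?r" using a pc(1) unfolding descendants_def by auto
      then show ?thesis using a by simp
    next
      assume a: "q = p' @ [c'] \<and> z = enc p'"
      obtain xs where xs: "q = ?r @ xs" using q(1) unfolding descendants_def by auto
      show ?thesis
      proof (cases xs rule: rev_cases)
        case Nil
        hence "p' = p" "c' = c" using a xs by auto
        then show ?thesis using g(2) pc(2) by simp
      next
        case (snoc ys d)
        hence "p' = ?r @ ys" using a xs by simp
        moreover have "p' \<in> S" using prefix_closedD[OF assms(1) pc(1)] .
        ultimately have "p' \<in> descendants S ?r" unfolding descendants_def by blast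
        then show ?thesis using a by simp
      qed
    qed
  qed
qed

lemma comp_minus_addr_edges:
  assumes "prefix_closed S" "p @ [c] \<in> S"
  shows "comp_minus (addr_edges S) {enc p, enc (p @ [c])} (enc (p @ [c])) =
    enc ` descendants S (p @ [c])"
  using descendants_subset_comp_minus[OF assms] comp_minus_subset_descendants[OF assms]
    by (rule subset_antisym[rotated])

text \<open>An S_k-tree on an address tree is given by one separation per non-root address q,
  oriented from q towards its parent.\<close>
definition orient_addr :: "(nat list \<Rightarrow> 'a set \<times> 'a set) \<Rightarrow> nat \<Rightarrow> nat \<Rightarrow> 'a set \<times> 'a set" where
  "orient_addr sep x y =
     (if list_decode x \<noteq> [] \<and> butlast (list_decode x) = list_decode y then sep (list_decode x)
      else sep_inv (sep (list_decode y)))"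

lemma orient_addr_up: "orient_addr sep (enc (p @ [c])) (enc p) = sep (p @ [c])"
  unfolding orient_addr_def by simp

lemma orient_addr_down:
  assumes "p \<noteq> []"
  shows "orient_addr sep (enc (butlast p)) (enc p) = sep_inv (sep p)"
proof -
  have "length (butlast (butlast p)) \<noteq> length p" using assms by (cases p) auto
  then have "butlast (butlast p) \<noteq> p" by metis
  then show ?thesis unfolding orient_addr_def by simp
qed

lemma orient_addr_edge:
  assumes "{x, y} \<in> addr_edges S" "x \<noteq> y" and sep: "\<And>q. q \<in> S \<Longrightarrow> q \<noteq> [] \<Longrightarrow> sep q \<in> vecS V E k"
  shows "orient_addr sep x y \<in> vecS V E k \<and> orient_addr sep y x = sep_inv (orient_addr sep x y)"
proof -
  obtain q c where qc: "q @ [c] \<in> S" "{x, y} = {enc q, enc (q @ [c])}" using assms(1)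
    by (rule addr_edgesE)
  have down: "orient_addr sep (enc q) (enc (q @ [c])) = sep_inv (sep (q @ [c]))"
    using orient_addr_down[of "q @ [c]" sep] by simp
  have v: "sep (q @ [c]) \<in> vecS V E k" using sep[OF qc(1)] by simp
  from qc(2) consider "x = enc q" "y = enc (q @ [c])" | "x = enc (q @ [c])" "y = enc q"
    by (auto simp: doubleton_eq_iff)
  then show ?thesis by cases (simp_all add: down orient_addr_up v sep_inv_vecS[OF v])
qed

lemma orient_addr_star:
  assumes "prefix_closed S" "p \<in> S"
  shows "{orient_addr sep z (enc p) | z. {z, enc p} \<in> addr_edges S \<and> z \<noteq> enc p} =
         (\<lambda>c. sep (p @ [c])) ` children S p \<union> (if p = [] then {} else {sep_inv (sep p)})"
    (is "?star = ?rhs")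
proof
  show "?star \<subseteq> ?rhs"
  proof
    fix s assume "s \<in> ?star"
    then obtain z where z: "s = orient_addr sep z (enc p)" "{z, enc p} \<in> addr_edges S" by blast
    then consider c where "p @ [c] \<in> S" "z = enc (p @ [c])" | "p \<noteq> []" "z = enc (butlast p)"
      using addr_edges_neighbour_iff[OF assms] by blast
    then show "s \<in> ?rhs"
    proof cases
      case (1 c)
      then have "s = sep (p @ [c])" by (simp only: z(1) orient_addr_up)
      then show ?thesis using 1(1) unfolding children_def by blast
    next
      case 2
      then have "s = sep_inv (sep p)" using z(1) orient_addr_down by simp
      then show ?thesis using 2(1) by simp
    qed
  qed
  show "?rhs \<subseteq> ?star"
  proof
    fix s assume "s \<in> ?rhs"
    then consider c where "p @ [c] \<in> S" "s = sep (p @ [c])" | "p \<noteq> []" "s = sep_inv (sep p)"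
      unfolding children_def by (auto split: if_splits)
    then show "s \<in> ?star"
    proof cases
      case (1 c)
      then have "{enc (p @ [c]), enc p} \<in> addr_edges S" "enc (p @ [c]) \<noteq> enc p"
        using addr_edges_neighbour_iff[OF assms] by auto
      then show ?thesis using 1(2) orient_addr_up[of sep p c] by force
    next
      case 2
      then have "{enc (butlast p), enc p} \<in> addr_edges S"
        using addr_edges_neighbour_iff[OF assms] by blast
      moreover have "enc (butlast p) \<noteq> enc p" using 2(1) by (cases p rule: rev_cases) auto
      ultimately show ?thesis using 2 orient_addr_down[of p sep] by force
    qed
  qed
qed

section \<open>From a narrow tree to an S_k-tree\<close>

locale Sk_tree_construction =
  fixes V :: "'a set" and E :: "'a set set" and k :: nat and t :: "'a set btree"
  assumes G: "simple_graph V E" and wf: "distinct_leaves t"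
    and cov: "\<Union>(leaves t) = V" and EU: "E \<subseteq> leaves t"
    and small: "\<And>X. X \<in> leaves t \<Longrightarrow> X \<subseteq> V \<and> finite X \<and> card X < k"
    and bd: "\<And>s. s \<in> subtrees t \<Longrightarrow> card (boundary (leaves t) (leaves s)) < k"
begin

abbreviation "U \<equiv> leaves t"

text \<open>The addresses of t together with a pendant address below every leaf: the star at a
  leaf X needs a separation whose small side contains the edge X.\<close>
definition S :: "nat list set" where
  "S = addrs t \<union> {p @ [0] | p. p \<in> addrs t \<and> is_leaf (subtree_at t p)}"

definition edge_sep :: "nat list \<Rightarrow> 'a set \<times> 'a set" where
  "edge_sep q = (if q \<in> addrs t then part_sep U (leaves (subtree_at t q))
                 else (\<Union>(leaves (subtree_at t (butlast q))), V))"

lemma S_finite: "finite S"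
proof -
  have "{p @ [0] | p. p \<in> addrs t \<and> is_leaf (subtree_at t p)} \<subseteq> (\<lambda>p. p @ [0]) ` addrs t" by auto
  then show ?thesis unfolding S_def using addrs_finite
    by (meson finite_Un finite_imageI finite_subset)
qed

lemma S_prefix_closed: "prefix_closed S"
  unfolding prefix_closed_def S_def using addrs_prefix by auto

lemma S_tree: "is_tree (enc ` S) (addr_edges S)"
  using prefix_closed_tree[OF S_finite _ S_prefix_closed] addrs_root unfolding S_def by blast

lemma pendant_S:
  assumes "p \<in> S" "p \<notin> addrs t"
  obtains q X where "p = q @ [0]" "q \<in> addrs t" "subtree_at t q = Leaf X"
  using assms unfolding S_def is_leaf_def by blast

lemma children_S_Node: "p \<in> addrs t \<Longrightarrow> subtree_at t p = Node l r \<Longrightarrow> children S p = {0, 1}"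
  using child_addr[of p t] unfolding children_def S_def is_leaf_def by auto

lemma children_S_Leaf: "p \<in> addrs t \<Longrightarrow> subtree_at t p = Leaf X \<Longrightarrow> children S p = {0}"
  using child_addr[of p t] unfolding children_def S_def is_leaf_def by auto

lemma children_S_pendant: "p \<in> S \<Longrightarrow> p \<notin> addrs t \<Longrightarrow> children S p = {}"
  using addrs_prefix unfolding children_def S_def by auto

lemma leaves_subtree_at_subset: "p \<in> addrs t \<Longrightarrow> leaves (subtree_at t p) \<subseteq> U"
  using subtree_at_subtrees subtrees_leaves by blast

lemma edge_sep_vecS:
  assumes "q \<in> S"
  shows "edge_sep q \<in> vecS V E k"
proof (cases "q \<in> addrs t")
  case True
  then show ?thesis unfolding edge_sep_def
    using part_sep_vecS[OF EU cov leaves_subtree_at_subset bd[OF subtree_at_subtrees]] by simp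
next
  case False
  with assms obtain p X where "q = p @ [0]" "p \<in> addrs t" "subtree_at t p = Leaf X"
    by (rule pendant_S)
  moreover have "X \<in> U" using leaves_subtree_at_subset calculation(2,3) by fastforce
  ultimately show ?thesis
    using False small[of X] unfolding edge_sep_def vecS_def is_sep_def by (auto simp: Int_absorb2)
qed

abbreviation "star_S p \<equiv>
  {orient_addr edge_sep z (enc p) | z. {z, enc p} \<in> addr_edges S \<and> z \<noteq> enc p}"

lemma star_S:
  "p \<in> S \<Longrightarrow> star_S p = (\<lambda>c. edge_sep (p @ [c])) ` children S p \<union>
     (if p = [] then {} else {sep_inv (edge_sep p)})"
  by (rule orient_addr_star[OF S_prefix_closed])

lemma star_S_Node:
  assumes p: "p \<in> addrs t" and t: "subtree_at t p = Node l r"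
  shows "star_S p \<in> Fstar V E k"
proof -
  have PU: "leaves l \<union> leaves r \<subseteq> U" using leaves_subtree_at_subset[OF p] t by simp
  have "distinct_leaves (subtree_at t p)"
    using subtrees_distinct_leaves[OF subtree_at_subtrees[OF p] wf] .
  then have disj: "leaves l \<inter> leaves r = {}" using t by simp
  have child: "p @ [0] \<in> addrs t" "p @ [1] \<in> addrs t" using child_addr[OF p] t by auto
  then have seps: "edge_sep (p @ [0]) = part_sep U (leaves l)"
    "edge_sep (p @ [1]) = part_sep U (leaves r)"
    using child_subtree_at[OF p t] unfolding edge_sep_def by auto
  have "p @ [0] \<in> S" "p @ [1] \<in> S" using child unfolding S_def by auto
  then have vec: "part_sep U (leaves l) \<in> vecS V E k" "part_sep U (leaves r) \<in> vecS V E k"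
    using edge_sep_vecS seps by metis+
  have "p \<in> S" using p unfolding S_def by simp
  show ?thesis
  proof (cases "p = []")
    case True
    then have "star_S p = {part_sep U (leaves l), part_sep U (leaves r), part_sep U (leaves r)}"
      using star_S[OF \<open>p \<in> S\<close>] children_S_Node[OF p t] seps by auto
    moreover have "leaves l \<union> leaves r \<union> leaves r = U" using t True by simp
    then have "{part_sep U (leaves l), part_sep U (leaves r), part_sep U (leaves r)} \<in> Fstar V E k"
      using disj vec by (intro part_sep_Fstar[OF EU cov]) auto
    ultimately show ?thesis by simp
  next
    case False
    have "sep_inv (edge_sep p) = part_sep U (U - (leaves l \<union> leaves r))"
      using sep_inv_part_sep[OF PU] p t unfolding edge_sep_def by simp
    moreover have "sep_inv (edge_sep p) \<in> vecS V E k"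
      using sep_inv_vecS edge_sep_vecS \<open>p \<in> S\<close> by blast
    ultimately have "star_S p = {part_sep U (leaves l), part_sep U (leaves r),
        part_sep U (U - (leaves l \<union> leaves r))}"
      and "part_sep U (U - (leaves l \<union> leaves r)) \<in> vecS V E k"
      using star_S[OF \<open>p \<in> S\<close>] children_S_Node[OF p t] seps False by auto
    moreover have "leaves l \<union> leaves r \<union> (U - (leaves l \<union> leaves r)) = U" using PU by auto
    ultimately show ?thesis using disj vec by (auto intro!: part_sep_Fstar[OF EU cov])
  qed
qed

lemma star_S_Leaf:
  assumes p: "p \<in> addrs t" and t: "subtree_at t p = Leaf X"
  shows "star_S p \<in> Fstar V E k"
proof -
  have "p \<in> S" "p @ [0] \<in> S" using p t unfolding S_def is_leaf_def by auto
  have "X \<in> U" using leaves_subtree_at_subset[OF p] t by simp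
  have "p @ [0] \<notin> addrs t" using child_addr[OF p] t by simp
  then have pendant: "edge_sep (p @ [0]) = (X, V)" using t unfolding edge_sep_def by simp
  have vec: "(X, V) \<in> vecS V E k" using edge_sep_vecS[OF \<open>p @ [0] \<in> S\<close>] pendant by simp
  show ?thesis
  proof (cases "p = []")
    case True
    then have "X = V" using t cov by simp
    moreover have "star_S p = {(X, V), (X, V), (X, V)}"
      using star_S[OF \<open>p \<in> S\<close>] children_S_Leaf[OF p t] pendant True by simp
    moreover have "{(V, V), (V, V), (V, V)} \<in> Fstar V E k"
      using vec \<open>X = V\<close> by (intro FstarI[OF refl]) (simp_all add: simple_graph_edge_subset[OF G])
    ultimately show ?thesis by simp
  next
    case False
    have "sep_inv (edge_sep p) = (\<Union>(U - {X}), X)"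
      using p t unfolding edge_sep_def part_sep_def sep_inv_def by simp
    moreover have "sep_inv (edge_sep p) \<in> vecS V E k"
      using sep_inv_vecS edge_sep_vecS \<open>p \<in> S\<close> by blast
    ultimately have star: "star_S p = {(X, V), (\<Union>(U - {X}), X), (\<Union>(U - {X}), X)}"
      and "(\<Union>(U - {X}), X) \<in> vecS V E k"
      using star_S[OF \<open>p \<in> S\<close>] children_S_Leaf[OF p t] pendant False by auto
    moreover have "e \<subseteq> X \<or> e \<subseteq> \<Union>(U - {X})" if "e \<in> E" for e
      using that EU by (cases "e = X") auto
    ultimately have "{(X, V), (\<Union>(U - {X}), X), (\<Union>(U - {X}), X)} \<in> Fstar V E k"
      using vec \<open>X \<in> U\<close> cov by (intro FstarI[OF refl]) auto
    then show ?thesis unfolding star .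
  qed
qed

lemma star_S_pendant:
  assumes "p \<in> S" "p \<notin> addrs t"
  shows "star_S p \<in> Fstar V E k"
proof -
  obtain q X where q: "p = q @ [0]" "q \<in> addrs t" "subtree_at t q = Leaf X"
    using assms by (rule pendant_S)
  have "sep_inv (edge_sep p) = (V, X)"
    using assms(2) q unfolding edge_sep_def sep_inv_def by simp
  then have "star_S p = {(V, X), (V, X), (V, X)}"
    using star_S[OF assms(1)] children_S_pendant[OF assms] q(1) by simp
  moreover have "(V, X) \<in> vecS V E k"
    using sep_inv_vecS edge_sep_vecS[OF assms(1)] \<open>sep_inv (edge_sep p) = (V, X)\<close> by metis
  then have "{(V, X), (V, X), (V, X)} \<in> Fstar V E k"
    by (intro FstarI[OF refl]) (simp_all add: simple_graph_edge_subset[OF G])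
  ultimately show ?thesis by simp
qed

theorem Sk_tree_exists: "has_Sk_tree_over_Fstar V E k"
proof -
  have "[0] \<in> S" using child_addr[OF addrs_root[of t], of 0] unfolding S_def is_leaf_def
    by (cases t) auto
  then have "addr_edges S \<noteq> {}" using addr_edgesI[of "[]" 0 S] by auto
  moreover have "\<forall>x y. {x, y} \<in> addr_edges S \<and> x \<noteq> y \<longrightarrow>
      orient_addr edge_sep x y \<in> vecS V E k \<and>
      orient_addr edge_sep y x = sep_inv (orient_addr edge_sep x y)"
    using orient_addr_edge edge_sep_vecS by blast
  moreover have "star_S p \<in> Fstar V E k" if "p \<in> S" for p
  proof (cases "p \<in> addrs t")
    case True
    then show ?thesis using star_S_Node star_S_Leaf by (cases "subtree_at t p") auto
  qed (use star_S_pendant that in blast)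
  then have "\<forall>n\<in>enc ` S. {orient_addr edge_sep x n | x. {x, n} \<in> addr_edges S \<and> x \<noteq> n}
      \<in> Fstar V E k" by blast
  ultimately show ?thesis unfolding has_Sk_tree_over_Fstar_def using S_tree by blast
qed

end

text \<open>The stars of an S_k-tree must cover every vertex, so isolated vertices become
  extra leaves {v} of the narrow tree.\<close>
definition isolated :: "'a set \<Rightarrow> 'a set set \<Rightarrow> 'a set set" where
  "isolated V E = {{v} | v. v \<in> V - \<Union>E}"

lemma boundary_Un_isolated:
  assumes "P \<subseteq> E"
  shows "boundary (E \<union> isolated V E) P = boundary E P"
proof -
  have "E \<union> isolated V E - P = (E - P) \<union> isolated V E"
    using assms unfolding isolated_def by auto
  moreover have "\<Union>P \<inter> \<Union>(isolated V E) = {}"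
    using assms unfolding isolated_def by auto
  ultimately show ?thesis unfolding boundary_def by auto
qed

lemma boundary_isolated:
  assumes "P \<subseteq> isolated V E"
  shows "boundary (E \<union> isolated V E) P = {}"
  using assms unfolding boundary_def isolated_def by blast

lemma narrow_set_Un_isolated:
  assumes "finite V" "0 < k" "E \<union> isolated V E \<noteq> {}" and E: "E = {} \<or> narrow_set E k E"
  shows "narrow_set (E \<union> isolated V E) k (E \<union> isolated V E)"
proof -
  define U where "U = E \<union> isolated V E"
  have "finite (isolated V E)" using \<open>finite V\<close> unfolding isolated_def by simp
  then have nI: "narrow_set0 U k (isolated V E)"
  proof (cases "isolated V E = {}")
    case False
    then obtain t where t: "leaves t = isolated V E" "distinct_leaves t"
      using ex_distinct_leaves \<open>finite (isolated V E)\<close> by blast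
    have "boundary U (leaves s) = {}" if "s \<in> subtrees t" for s
      using boundary_isolated subtrees_leaves[OF that] t(1) unfolding U_def by blast
    then show ?thesis
      using t \<open>0 < k\<close> unfolding narrow_set0_def narrow_set_def narrow_tree_def by auto
  qed (simp add: narrow_set0_def)
  have nE: "narrow_set0 U k E"
    using E boundary_Un_isolated subtrees_leaves
    unfolding narrow_set0_def narrow_set_def narrow_tree_def U_def by metis
  have "E \<inter> isolated V E = {}" unfolding isolated_def by auto
  moreover have "boundary U (E \<union> isolated V E) = {}" unfolding boundary_def U_def by simp
  ultimately have "narrow_set0 U k (E \<union> isolated V E)"
    using narrow_set0_join[OF nE nI] \<open>0 < k\<close> by simp
  then show ?thesis using assms(3) unfolding narrow_set0_def U_def by blast
qed

lemma Sk_tree_of_narrow_set: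
  assumes G: "simple_graph V E" and "V \<noteq> {}" and k3: "k \<ge> 3"
    and "E = {} \<or> narrow_set E k E"
  shows "has_Sk_tree_over_Fstar V E k"
proof -
  have EV: "\<Union>E \<subseteq> V" and "finite V" using G unfolding simple_graph_def by auto
  have "E \<union> isolated V E \<noteq> {}" using \<open>V \<noteq> {}\<close> unfolding isolated_def by auto
  with narrow_set_Un_isolated[OF \<open>finite V\<close> _ _ assms(4)] k3
  obtain t where t: "leaves t = E \<union> isolated V E" "narrow_tree (E \<union> isolated V E) k t"
    unfolding narrow_set_def by auto
  interpret Sk_tree_construction V E k t
  proof
    show "distinct_leaves t" using t(2) unfolding narrow_tree_def by simp
    show "\<Union>(leaves t) = V" using t(1) EV unfolding isolated_def by blast
    show "E \<subseteq> leaves t" using t(1) by simp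
    show "X \<subseteq> V \<and> finite X \<and> card X < k" if "X \<in> leaves t" for X
    proof (cases "X \<in> E")
      case True
      then show ?thesis using k3 simple_graph_edge_card[OF G] simple_graph_edge_subset[OF G] by simp
    next
      case False
      then show ?thesis using that t(1) k3 unfolding isolated_def by auto
    qed
    show "card (boundary (leaves t) (leaves s)) < k" if "s \<in> subtrees t" for s
      using t that unfolding narrow_tree_def by simp
  qed (fact G)
  show ?thesis by (rule Sk_tree_exists)
qed

section \<open>From a narrow tree to a branch decomposition\<close>

locale branch_decomp_construction =
  fixes V :: "'a set" and E :: "'a set set" and l r :: "'a set btree"
  assumes wf: "distinct_leaves (Node l r)" and itE: "leaves (Node l r) = E" and finE: "finite (\<Union>E)"
begin

text \<open>The root of Node l r would have degree 2, so the tree is rooted at the root of l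
  instead and r is attached below it as a third child, with address 2.\<close>
definition S :: "nat list set" where "S = addrs l \<union> Cons 2 ` addrs r"

definition node_tree :: "nat list \<Rightarrow> 'a set btree" where
  "node_tree p = (if p \<noteq> [] \<and> hd p = 2 then subtree_at r (tl p) else subtree_at l p)"

lemma S_finite: "finite S" unfolding S_def by (simp add: addrs_finite)
lemma S_root: "[] \<in> S" unfolding S_def by (simp add: addrs_root)
lemma S_prefix_closed: "prefix_closed S"
  unfolding prefix_closed_def S_def
proof (intro allI impI)
  fix p c assume a: "p @ [c] \<in> addrs l \<union> Cons 2 ` addrs r"
  show "p \<in> addrs l \<union> Cons 2 ` addrs r"
  proof (cases "p @ [c] \<in> addrs l")
    case True then show ?thesis using addrs_prefix by blast
  next
    case False
    then obtain q where q: "q \<in> addrs r" "p @ [c] = 2 # q" using a by auto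
    show ?thesis
    proof (cases p)
      case Nil then show ?thesis by (simp add: addrs_root)
    next
      case (Cons a p')
      hence "q = p' @ [c]" "a = 2" using q by auto
      then show ?thesis using Cons q(1) addrs_prefix by blast
    qed
  qed
qed

lemma S_tree: "is_tree (enc ` S) (addr_edges S)"
  using prefix_closed_tree[OF S_finite S_root S_prefix_closed] .

lemma distinct_leaves_lr: "distinct_leaves l" "distinct_leaves r" "leaves l \<inter> leaves r = {}"
  using wf by auto

lemma node_tree_append:
  assumes "q \<in> S" "q \<noteq> []"
  shows "(q @ xs \<in> S \<longleftrightarrow> xs \<in> addrs (node_tree q)) \<and>
    (q @ xs \<in> S \<longrightarrow> node_tree (q @ xs) = subtree_at (node_tree q) xs)"
proof (cases "q \<in> addrs l")
  case True
  have h: "hd q \<noteq> 2" using addrs_hd[OF True assms(2)] by auto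
  have "q @ xs \<notin> Cons 2 ` addrs r" using h assms(2) by (cases q) auto
  moreover have "node_tree q = subtree_at l q" "node_tree (q @ xs) = subtree_at l (q @ xs)"
    unfolding node_tree_def using h assms(2) by auto
  ultimately show ?thesis using addrs_append[OF True, of xs] unfolding S_def by auto
next
  case False
  then obtain q' where q': "q = 2 # q'" "q' \<in> addrs r" using assms(1) unfolding S_def by auto
  have "q @ xs \<notin> addrs l"
  proof
    assume "q @ xs \<in> addrs l"
    with addrs_hd[OF this] q' show False by simp
  qed
  moreover have "node_tree q = subtree_at r q'" "node_tree (q @ xs) = subtree_at r (q' @ xs)"
    unfolding node_tree_def using q' by auto
  moreover have "q @ xs \<in> Cons 2 ` addrs r \<longleftrightarrow> q' @ xs \<in> addrs r" using q' by auto
  ultimately show ?thesis using addrs_append[OF q'(2), of xs] unfolding S_def by auto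
qed

lemma node_tree_subtrees: "q \<in> S \<Longrightarrow> node_tree q \<in> subtrees (Node l r)"
proof -
  assume q: "q \<in> S"
  show ?thesis
  proof (cases "q \<in> addrs l")
    case True
    hence "q = [] \<or> hd q \<noteq> 2" using addrs_hd by fastforce
    hence "node_tree q = subtree_at l q" unfolding node_tree_def by auto
    then show ?thesis using subtree_at_subtrees[OF True] by simp
  next
    case False
    then obtain q' where q': "q = 2 # q'" "q' \<in> addrs r" using q unfolding S_def by auto
    hence "node_tree q = subtree_at r q'" unfolding node_tree_def by simp
    then show ?thesis using subtree_at_subtrees[OF q'(2)] by simp
  qed
qed

lemma node_tree_root: "node_tree [] = l" unfolding node_tree_def by simp

lemma children_S:
  assumes "p \<in> S"
  shows "children S p = (if p = [] then (if is_leaf l then {2} else {0,1,2})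
                          else (if is_leaf (node_tree p) then {} else {0,1}))"
proof (cases "p = []")
  case True
  have "[c] \<in> S \<longleftrightarrow> c = 2 \<or> ((\<exists>a b. l = Node a b) \<and> (c = 0 \<or> c = 1))" for c
  proof -
    have "[c] \<in> addrs l \<longleftrightarrow> (\<exists>a b. l = Node a b) \<and> (c = 0 \<or> c = 1)"
      using child_addr[OF addrs_root[of l], of c] by simp
    moreover have "[c] \<in> Cons 2 ` addrs r \<longleftrightarrow> c = 2" by (auto simp: addrs_root)
    ultimately show ?thesis unfolding S_def by auto
  qed
  then show ?thesis using True unfolding children_def is_leaf_def by (cases l) auto
next
  case False
  have "p @ [c] \<in> S \<longleftrightarrow> (\<exists>a b. node_tree p = Node a b) \<and> (c = 0 \<or> c = 1)" for c
    using node_tree_append[OF assms False, of "[c]"]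
      by (cases "node_tree p") (auto simp: image_iff addrs_root)
  then show ?thesis using False unfolding children_def is_leaf_def by (cases "node_tree p") auto
qed

lemma tdeg_node_tree:
  assumes "p \<in> S"
  shows "tdeg (addr_edges S) (enc p) = (if is_leaf (node_tree p) then 1 else 3)"
  using tdeg_addr_edges[OF S_finite S_prefix_closed assms] children_S[OF assms] node_tree_root
  by (cases "p = []") (auto simp: is_leaf_def)

lemma node_tree_leaf_exists:
  assumes "e \<in> E" shows "\<exists>p\<in>S. node_tree p = Leaf e"
proof -
  have "e \<in> leaves l \<or> e \<in> leaves r" using assms itE by auto
  then show ?thesis
  proof
    assume "e \<in> leaves l"
    then obtain q where q: "q \<in> addrs l" "subtree_at l q = Leaf e" using leaves_addrs[of l] by auto
    hence "q = [] \<or> hd q \<noteq> 2" using addrs_hd by fastforce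
    hence "node_tree q = Leaf e" unfolding node_tree_def using q by auto
    then show ?thesis using q(1) unfolding S_def by auto
  next
    assume "e \<in> leaves r"
    then obtain q where q: "q \<in> addrs r" "subtree_at r q = Leaf e" using leaves_addrs[of r] by auto
    hence "node_tree (2 # q) = Leaf e" unfolding node_tree_def by simp
    then show ?thesis using q(1) unfolding S_def by auto
  qed
qed

lemma node_tree_leaf_unique:
  assumes "p1 \<in> S" "p2 \<in> S" "node_tree p1 = Leaf e" "node_tree p2 = Leaf e"
  shows "p1 = p2"
proof -
  have A: "x \<in> leaves l" if "q \<in> addrs l" "subtree_at l q = Leaf x" for q x
    using that leaves_addrs[of l] by auto
  have B: "x \<in> leaves r" if "q \<in> addrs r" "subtree_at r q = Leaf x" for q x
    using that leaves_addrs[of r] by auto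
  have cl: "node_tree q = subtree_at l q" if "q \<in> addrs l" for q
  proof -
    have "q = [] \<or> hd q \<noteq> 2" using addrs_hd[OF that] by fastforce
    then show ?thesis unfolding node_tree_def by auto
  qed
  show ?thesis
  proof (cases "p1 \<in> addrs l")
    case T1: True
    show ?thesis
    proof (cases "p2 \<in> addrs l")
      case True
      then show ?thesis using leaf_addr_unique[OF distinct_leaves_lr(1) T1 True] assms cl T1 by simp
    next
      case False
      then obtain q2 where "p2 = 2 # q2" "q2 \<in> addrs r" using assms(2) unfolding S_def by auto
      hence "e \<in> leaves r" using B assms(4) unfolding node_tree_def by simp
      moreover have "e \<in> leaves l" using A T1 assms(3) cl by simp
      ultimately show ?thesis using distinct_leaves_lr(3) by auto
    qed
  next
    case F1: False
    then obtain q1 where q1: "p1 = 2 # q1" "q1 \<in> addrs r" using assms(1) unfolding S_def by auto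
    show ?thesis
    proof (cases "p2 \<in> addrs l")
      case True
      have "e \<in> leaves r" using B q1 assms(3) unfolding node_tree_def by simp
      moreover have "e \<in> leaves l" using A True assms(4) cl by simp
      ultimately show ?thesis using distinct_leaves_lr(3) by auto
    next
      case False
      then obtain q2 where q2: "p2 = 2 # q2" "q2 \<in> addrs r" using assms(2) unfolding S_def by auto
      have "subtree_at r q1 = Leaf e" "subtree_at r q2 = Leaf e" using q1 q2 assms(3,4)
        unfolding node_tree_def by auto
      then show ?thesis using leaf_addr_unique[OF distinct_leaves_lr(2) q1(2) q2(2)] q1 q2 by simp
    qed
  qed
qed

definition leaf_addr :: "'a set \<Rightarrow> nat list" where
  "leaf_addr e = (THE p. p \<in> S \<and> node_tree p = Leaf e)"

lemma leaf_addr_spec: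
  assumes "e \<in> E"
  shows "leaf_addr e \<in> S \<and> node_tree (leaf_addr e) = Leaf e"
proof -
  have "\<exists>!p. p \<in> S \<and> node_tree p = Leaf e"
    using node_tree_leaf_exists[OF assms] node_tree_leaf_unique by blast
  then show ?thesis unfolding leaf_addr_def by (rule theI')
qed

lemma leaf_addr_eq: "e \<in> E \<Longrightarrow> p \<in> S \<Longrightarrow> node_tree p = Leaf e \<Longrightarrow> leaf_addr e = p"
  using leaf_addr_spec node_tree_leaf_unique by blast

definition L :: "'a set \<Rightarrow> nat" where "L e = enc (leaf_addr e)"

lemma leaves_node_tree: "q \<in> S \<Longrightarrow> leaves (node_tree q) \<subseteq> E"
  using node_tree_subtrees subtrees_leaves itE by blast

lemma branch_decomp_L: "branch_decomp E (enc ` S) (addr_edges S) L"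
  unfolding branch_decomp_def
proof (intro conjI ballI)
  show "is_tree (enc ` S) (addr_edges S)" using S_tree .
  fix n assume "n \<in> enc ` S"
  then obtain p where "p \<in> S" "n = enc p" by auto
  then show "tdeg (addr_edges S) n = 1 \<or> tdeg (addr_edges S) n = 3" using tdeg_node_tree by simp
next
  show "bij_betw L E {t \<in> enc ` S. tdeg (addr_edges S) t = 1}"
    unfolding bij_betw_def
  proof
    show "inj_on L E"
    proof (rule inj_onI)
      fix e1 e2 assume "e1 \<in> E" "e2 \<in> E" "L e1 = L e2"
      hence "leaf_addr e1 = leaf_addr e2" unfolding L_def by simp
      moreover have "node_tree (leaf_addr e1) = Leaf e1" "node_tree (leaf_addr e2) = Leaf e2"
        using leaf_addr_spec[OF \<open>e1 \<in> E\<close>] leaf_addr_spec[OF \<open>e2 \<in> E\<close>] by auto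
      ultimately have "Leaf e1 = Leaf e2" by metis
      then show "e1 = e2" by simp
    qed
    show "L ` E = {t \<in> enc ` S. tdeg (addr_edges S) t = 1}"
    proof
      show "L ` E \<subseteq> {t \<in> enc ` S. tdeg (addr_edges S) t = 1}"
      proof
        fix n assume "n \<in> L ` E"
        then obtain e where e: "e \<in> E" "n = enc (leaf_addr e)" unfolding L_def by auto
        have "leaf_addr e \<in> S" "is_leaf (node_tree (leaf_addr e))" using leaf_addr_spec[OF e(1)]
          unfolding is_leaf_def by auto
        then show "n \<in> {t \<in> enc ` S. tdeg (addr_edges S) t = 1}" using tdeg_node_tree e(2) by simp
      qed
      show "{t \<in> enc ` S. tdeg (addr_edges S) t = 1} \<subseteq> L ` E"
      proof
        fix n assume "n \<in> {t \<in> enc ` S. tdeg (addr_edges S) t = 1}"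
        then obtain p where p: "p \<in> S" "n = enc p" "tdeg (addr_edges S) (enc p) = 1" by auto
        hence "is_leaf (node_tree p)" using tdeg_node_tree by (auto split: if_splits)
        then obtain e where e: "node_tree p = Leaf e" unfolding is_leaf_def by auto
        have "e \<in> E" using leaves_node_tree[OF p(1)] e by auto
        hence "L e = n" using leaf_addr_eq[OF _ p(1) e] p(2) unfolding L_def by simp
        then show "n \<in> L ` E" using \<open>e \<in> E\<close> by blast
      qed
    qed
  qed
qed

lemma L_comp_minus_iff:
  assumes "q \<in> S" "q \<noteq> []" "e \<in> E"
  shows "L e \<in> enc ` descendants S q \<longleftrightarrow> e \<in> leaves (node_tree q)"
proof
  assume "L e \<in> enc ` descendants S q"
  then obtain xs where xs: "q @ xs \<in> S" "L e = enc (q @ xs)" unfolding descendants_def by auto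
  hence "leaf_addr e = q @ xs" unfolding L_def by simp
  hence "node_tree (q @ xs) = Leaf e" using leaf_addr_spec[OF assms(3)] by simp
  hence "subtree_at (node_tree q) xs = Leaf e" "xs \<in> addrs (node_tree q)"
    using node_tree_append[OF assms(1,2), of xs] xs(1) by auto
  then show "e \<in> leaves (node_tree q)" using leaves_addrs[of "node_tree q"] by auto
next
  assume "e \<in> leaves (node_tree q)"
  then obtain xs where xs: "xs \<in> addrs (node_tree q)" "subtree_at (node_tree q) xs = Leaf e"
    using leaves_addrs[of "node_tree q"] by auto
  hence "q @ xs \<in> S" "node_tree (q @ xs) = Leaf e" using node_tree_append[OF assms(1,2), of xs]
    by auto
  hence "leaf_addr e = q @ xs" using leaf_addr_eq[OF assms(3)] by simp
  then show "L e \<in> enc ` descendants S q" unfolding L_def descendants_def using \<open>q @ xs \<in> S\<close> by auto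
qed

lemma edge_width_le_boundary:
  assumes f: "f \<in> addr_edges S"
  shows "\<exists>s\<in>subtrees (Node l r). edge_width V E (addr_edges S) L f \<le> card (boundary E (leaves s))"
proof -
  obtain p c where pc: "p @ [c] \<in> S" "f = {enc p, enc (p @ [c])}" using f by (rule addr_edgesE)
  define q where "q = p @ [c]"
  have q: "q \<in> S" "q \<noteq> []" using pc unfolding q_def by auto
  define I where "I = leaves (node_tree q)"
  have fe: "{enc p, enc q} \<in> addr_edges S" using f pc unfolding q_def by simp
  have Cq: "comp_minus (addr_edges S) f (enc q) = enc ` descendants S q"
    using comp_minus_addr_edges[OF S_prefix_closed pc(1)] pc(2) unfolding q_def by simp
  have dj: "comp_minus (addr_edges S) f (enc p) \<inter> comp_minus (addr_edges S) f (enc q) = {}"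
    using comp_minus_disjoint[OF S_tree fe] pc(2) unfolding q_def by simp
  have inq: "e \<in> I" if "e \<in> E" "L e \<in> comp_minus (addr_edges S) f (enc q)" for e
    using that L_comp_minus_iff[OF q] Cq unfolding I_def by simp
  have inp: "e \<notin> I" if "e \<in> E" "L e \<in> comp_minus (addr_edges S) f (enc p)" for e
    using that L_comp_minus_iff[OF q] Cq dj unfolding I_def by blast
  have "{w\<in>V. \<exists>u v. f = {u, v} \<and>
      (\<exists>e1\<in>E. \<exists>e2\<in>E. w \<in> e1 \<and> w \<in> e2 \<and>
         L e1 \<in> comp_minus (addr_edges S) f u \<and> L e2 \<in> comp_minus (addr_edges S) f v)}
      \<subseteq> boundary E I" (is "?W \<subseteq> _")
  proof
    fix w assume "w \<in> ?W"
    then obtain u v e1 e2 where w: "f = {u,v}" "e1 \<in> E" "e2 \<in> E" "w \<in> e1" "w \<in> e2"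
      "L e1 \<in> comp_minus (addr_edges S) f u" "L e2 \<in> comp_minus (addr_edges S) f v" by blast
    have "(u = enc p \<and> v = enc q) \<or> (u = enc q \<and> v = enc p)" using w(1) pc(2) unfolding q_def
      by (auto simp: doubleton_eq_iff)
    then have "(e1 \<notin> I \<and> e2 \<in> I) \<or> (e1 \<in> I \<and> e2 \<notin> I)" using inq inp w by blast
    moreover have "I \<subseteq> E" using leaves_node_tree[OF q(1)] unfolding I_def .
    ultimately show "w \<in> boundary E I" unfolding boundary_def using w by blast
  qed
  moreover have "finite (boundary E I)" unfolding boundary_def using finE
    by (meson Diff_subset Sup_subset_mono finite_Int finite_subset)
  ultimately have "edge_width V E (addr_edges S) L f \<le> card (boundary E I)"
    unfolding edge_width_def by (rule card_mono[rotated])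
  then show ?thesis using node_tree_subtrees[OF q(1)] unfolding I_def by blast
qed

theorem narrow_branch_decomp_exists:
  "\<exists>N ET L. branch_decomp E N ET L \<and>
     (\<forall>f\<in>ET. \<exists>s\<in>subtrees (Node l r). edge_width V E ET L f \<le> card (boundary E (leaves s)))"
  using branch_decomp_L edge_width_le_boundary by blast

end

lemma branch_decomp_of_tree:
  assumes "finite (\<Union>E)" "distinct_leaves t" "leaves t = E" "card E \<ge> 2"
  shows "\<exists>N ET L. branch_decomp E N ET L \<and>
           (\<forall>f\<in>ET. \<exists>s\<in>subtrees t. edge_width V E ET L f \<le> card (boundary E (leaves s)))"
proof (cases t)
  case (Leaf x)
  then show ?thesis using assms(3,4) by auto
next
  case (Node l r)
  interpret branch_decomp_construction V E l r using assms Node by unfold_locales auto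
  show ?thesis using narrow_branch_decomp_exists Node by simp
qed

lemma branchwidth_less_iff:
  assumes "finite (\<Union>E)" "card E \<ge> 2"
  shows "branchwidth V E < k \<longleftrightarrow>
           (\<exists>N ET L. branch_decomp E N ET L \<and> (\<forall>f\<in>ET. edge_width V E ET L f < k))"
proof -
  define W where "W = {w. \<exists>N ET L. branch_decomp E N ET L \<and> w = decomp_width V E ET L}"
  have bw: "branchwidth V E = Inf W" unfolding branchwidth_def W_def using assms(2) by simp
  have "finite E" "E \<noteq> {}" using assms(2) by (auto intro: card_ge_0_finite)
  then obtain t where "leaves t = E" "distinct_leaves t" using ex_distinct_leaves by blast
  then have "W \<noteq> {}" using branch_decomp_of_tree[OF assms(1) _ _ assms(2), of t V] unfolding W_def
    by blast
  have width_less: "decomp_width V E ET L < k \<longleftrightarrow> (\<forall>f\<in>ET. edge_width V E ET L f < k)"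
    if "branch_decomp E N ET L" for N ET L
  proof -
    have T: "is_tree N ET" using that unfolding branch_decomp_def by simp
    obtain e where "e \<in> E" using \<open>E \<noteq> {}\<close> by blast
    then have "tdeg ET (L e) = 1" using that unfolding branch_decomp_def bij_betw_def by auto
    then have "ET \<noteq> {}" unfolding tdeg_def by auto
    then show ?thesis unfolding decomp_width_def using tree_finite_edges[OF T] by simp
  qed
  show ?thesis
  proof
    assume "branchwidth V E < k"
    moreover obtain N ET L where "branch_decomp E N ET L" "Inf W = decomp_width V E ET L"
      using Inf_nat_def1[OF \<open>W \<noteq> {}\<close>] unfolding W_def by blast
    ultimately show "\<exists>N ET L. branch_decomp E N ET L \<and> (\<forall>f\<in>ET. edge_width V E ET L f < k)"
      using width_less unfolding bw by auto
  next
    assume "\<exists>N ET L. branch_decomp E N ET L \<and> (\<forall>f\<in>ET. edge_width V E ET L f < k)"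
    then obtain w where "w \<in> W" "w < k" using width_less unfolding W_def by blast
    then show "branchwidth V E < k" unfolding bw by (meson wellorder_Inf_le1 le_less_trans)
  qed
qed

lemma narrow_set_of_branchwidth:
  assumes G: "simple_graph V E" and k3: "k \<ge> 3" and E2: "card E \<ge> 2"
    and "branchwidth V E < k"
  shows "narrow_set E k E"
proof -
  obtain N ET L where "branch_decomp E N ET L" "\<forall>f\<in>ET. edge_width V E ET L f < k"
    using assms(4) branchwidth_less_iff[OF simple_graph_finite_Union[OF G] E2] by blast
  then interpret narrow_branch_decomp V E k N ET L using G k3 by unfold_locales auto
  show ?thesis using narrow_set_all_edges E2 by fastforce
qed

lemma branchwidth_of_narrow_set:
  assumes G: "simple_graph V E" and E2: "card E \<ge> 2" and "narrow_set E k E"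
  shows "branchwidth V E < k"
proof -
  obtain t where t: "leaves t = E" "narrow_tree E k t" using assms(3) unfolding narrow_set_def
    by blast
  then obtain N ET L where "branch_decomp E N ET L"
      "\<forall>f\<in>ET. \<exists>s\<in>subtrees t. edge_width V E ET L f \<le> card (boundary E (leaves s))"
    using branch_decomp_of_tree[OF simple_graph_finite_Union[OF G] _ _ E2]
    unfolding narrow_tree_def by blast
  moreover have "\<forall>s\<in>subtrees t. card (boundary E (leaves s)) < k"
    using t(2) unfolding narrow_tree_def by simp
  ultimately show ?thesis
    using branchwidth_less_iff[OF simple_graph_finite_Union[OF G] E2] by (meson le_less_trans)
qed

theorem lemma5p4:
  fixes V :: "'a set" and E :: "'a set set" and k :: nat
  assumes "simple_graph V E" and "V \<noteq> {}" and "k \<ge> 3"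
  shows "branchwidth V E < k \<longleftrightarrow> has_Sk_tree_over_Fstar V E k"
proof (cases "card E \<le> 1")
  case True
  then have "E = {} \<or> narrow_set E k E"
    using narrow_set_card_le_1[OF simple_graph_finite_edges[OF assms(1)]] assms(3) by simp
  then show ?thesis
    using Sk_tree_of_narrow_set[OF assms] True assms(3) unfolding branchwidth_def by simp
next
  case False
  then have E2: "card E \<ge> 2" by simp
  then have "branchwidth V E < k \<longleftrightarrow> narrow_set E k E"
    using narrow_set_of_branchwidth[OF assms(1,3)] branchwidth_of_narrow_set[OF assms(1)] by blast
  also have "\<dots> \<longleftrightarrow> has_Sk_tree_over_Fstar V E k"
    using narrow_set_of_Sk_tree[OF assms(1,3)] Sk_tree_of_narrow_set[OF assms] E2 by fastforce
  finally show ?thesis .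
qed

end
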